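(* Let $\mathcal{T}$ be a meager hereditary family, let $l$ be a positive integer and let $\varepsilon>0$. For every $\eta>0$ there exists $n_0$ such that the following holds for all $n\ge n_0$. Let $(G_1,\dots,G_l)$ be vertex-disjoint graphs with $G_i\in\mathcal{T}$ for every $i\in[l]$ such that $\mathcal{X}=(V(G_1),\dots,V(G_l))$ is an $\varepsilon$-balanced partition of $[n]$. Then for at least a $(1-\eta)$-fraction of all extensions $G$ of $(G_1,\dots,G_l)$, the partition $\mathcal{X}$ is the unique $(\mathcal{T},l)$-partition of $G$. (That is: $\mathcal{X}$ is the unique $(\mathcal{T},l)$-partition of $G$ for almost every extension $G$ of $(G_1,\dots,G_l)$.)
   Context: All graphs are finite and simple. A family is hereditary if closed under isomorphism and induced subgraphs. For $s,t\ge0$, $\mathcal{H}(s,t)$ is the family of graphs whose vertex set can be partitioned into $s$ independent sets and $t$ cliques (parts may be empty); $\chi_c(\mathcal{F})$ is the maximum $l$ with $\mathcal{H}(s,l-s)\subseteq\mathcal{F}$ for some $0\le s\le l$. A hereditary family is thin if $\chi_c\le1$, meager if thin and it does not contain some substar and does not contain some antisubstar (substar: subgraph of a star; antisubstar: complement of a substar). A $(\mathcal{T},l)$-partition of $G$ is a partition $(X_1,\dots,X_l)$ of $V(G)$ with $G[X_i]\in\mathcal{T}$ for all $i$. A partition $\mathcal{X}$ of an $n$-element set is $\varepsilon$-balanced if $\big||X|-n/|\mathcal{X}|\big|\le n^{1-\varepsilon}$ for all $X\in\mathcal{X}$. For vertex-disjoint graphs $(G_1,\dots,G_l)$, an extension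 is a graph $G$ with $V(G)=\bigcup_i V(G_i)$ such that each $G_i$ is an induced subgraph of $G$. *)

theory Defs
  imports Complex_Main
begin

text \<open>Since families are closed under isomorphism,
  fixing the vertex type nat loses no generality for finite graphs.\<close>

type_synonym graph = "nat set \<times> nat set set"

definition verts :: "graph \<Rightarrow> nat set" where "verts G = fst G"
definition edges :: "graph \<Rightarrow> nat set set" where "edges G = snd G"

definition wf_graph :: "graph \<Rightarrow> bool" where
  "wf_graph G \<longleftrightarrow> finite (verts G) \<and>
     (\<forall>e\<in>edges G. \<exists>x y. x \<noteq> y \<and> e = {x, y} \<and> x \<in> verts G \<and> y \<in> verts G)"

definition induced :: "graph \<Rightarrow> nat set \<Rightarrow> graph" where
  "induced G U = (U, {e\<in>edges G. e \<subseteq> U})"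

definition graph_iso :: "graph \<Rightarrow> graph \<Rightarrow> bool" where
  "graph_iso G H \<longleftrightarrow> (\<exists>f. bij_betw f (verts G) (verts H) \<and>
     (\<forall>x\<in>verts G. \<forall>y\<in>verts G. {x, y} \<in> edges G \<longleftrightarrow> {f x, f y} \<in> edges H))"

definition complement :: "graph \<Rightarrow> graph" where
  "complement G = (verts G, {{x, y} | x y. x \<in> verts G \<and> y \<in> verts G \<and> x \<noteq> y \<and> {x, y} \<notin> edges G})"

definition hereditary :: "graph set \<Rightarrow> bool" where
  "hereditary F \<longleftrightarrow> (\<forall>G\<in>F. wf_graph G) \<and>
     (\<forall>G H. G \<in> F \<longrightarrow> wf_graph H \<longrightarrow> graph_iso G H \<longrightarrow> H \<in> F) \<and>
     (\<forall>G U. G \<in> F \<longrightarrow> U \<subseteq> verts G \<longrightarrow> induced G U \<in> F)"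

definition independent_set :: "graph \<Rightarrow> nat set \<Rightarrow> bool" where
  "independent_set G A \<longleftrightarrow> (\<forall>x\<in>A. \<forall>y\<in>A. {x, y} \<notin> edges G)"

definition clique :: "graph \<Rightarrow> nat set \<Rightarrow> bool" where
  "clique G A \<longleftrightarrow> (\<forall>x\<in>A. \<forall>y\<in>A. x \<noteq> y \<longrightarrow> {x, y} \<in> edges G)"

text \<open>\<open>\<H>(s,t)\<close>: parts indexed by 0..<s are independent sets, parts s..<s+t are cliques;
  parts may be empty.\<close>
definition Hst :: "nat \<Rightarrow> nat \<Rightarrow> graph set" where
  "Hst s t = {G. wf_graph G \<and> (\<exists>A :: nat \<Rightarrow> nat set.
      (\<Union>i<s+t. A i) = verts G \<and>
      (\<forall>i<s+t. \<forall>j<s+t. i \<noteq> j \<longrightarrow> A i \<inter> A j = {}) \<and>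
      (\<forall>i<s. independent_set G (A i)) \<and>
      (\<forall>i. s \<le> i \<and> i < s+t \<longrightarrow> clique G (A i)))}"

text \<open>\<open>\<chi>\<^sub>c(F) \<le> k\<close>: every l with \<open>\<H>(s,l-s) \<subseteq> F\<close> for some \<open>0 \<le> s \<le> l\<close> satisfies l \<le> k.\<close>
definition chi_c_le :: "graph set \<Rightarrow> nat \<Rightarrow> bool" where
  "chi_c_le F k \<longleftrightarrow> (\<forall>l s. s \<le> l \<and> Hst s (l - s) \<subseteq> F \<longrightarrow> l \<le> k)"

definition thin :: "graph set \<Rightarrow> bool" where
  "thin F \<longleftrightarrow> hereditary F \<and> chi_c_le F 1"

definition substar :: "graph \<Rightarrow> bool" where
  "substar G \<longleftrightarrow> wf_graph G \<and> (\<exists>v. \<forall>e\<in>edges G. v \<in> e)"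

definition antisubstar :: "graph \<Rightarrow> bool" where
  "antisubstar G \<longleftrightarrow> wf_graph G \<and> substar (complement G)"

definition meager :: "graph set \<Rightarrow> bool" where
  "meager F \<longleftrightarrow> thin F \<and> (\<exists>G. substar G \<and> G \<notin> F) \<and> (\<exists>G. antisubstar G \<and> G \<notin> F)"

definition Tl_partition :: "graph set \<Rightarrow> nat \<Rightarrow> graph \<Rightarrow> (nat \<Rightarrow> nat set) \<Rightarrow> bool" where
  "Tl_partition T l G Y \<longleftrightarrow> (\<Union>i<l. Y i) = verts G \<and>
     (\<forall>i<l. \<forall>j<l. i \<noteq> j \<longrightarrow> Y i \<inter> Y j = {}) \<and>
     (\<forall>i<l. induced G (Y i) \<in> T)"

text \<open>X is the unique (T,l)-partition of G, partitions being compared as sets of parts.\<close>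
definition unique_Tl_partition :: "graph set \<Rightarrow> nat \<Rightarrow> graph \<Rightarrow> (nat \<Rightarrow> nat set) \<Rightarrow> bool" where
  "unique_Tl_partition T l G X \<longleftrightarrow> Tl_partition T l G X \<and>
     (\<forall>Y. Tl_partition T l G Y \<longrightarrow> Y ` {..<l} = X ` {..<l})"

definition eps_balanced :: "real \<Rightarrow> nat \<Rightarrow> nat \<Rightarrow> (nat \<Rightarrow> nat set) \<Rightarrow> bool" where
  "eps_balanced \<epsilon> n l X \<longleftrightarrow>
     (\<forall>i<l. \<bar>real (card (X i)) - real n / real l\<bar> \<le> real n powr (1 - \<epsilon>))"

definition extensions :: "nat \<Rightarrow> (nat \<Rightarrow> graph) \<Rightarrow> graph set" where
  "extensions l Gs = {G. wf_graph G \<and> verts G = (\<Union>i<l. verts (Gs i)) \<and>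
      (\<forall>i<l. induced G (verts (Gs i)) = Gs i)}"

end

(*
  Let a = ceil(n^(2/3)); every part X_i has at least n/(2l) vertices. If an extension has a
  (T,l)-partition Y other than the parts, then either some class of Y meets two parts in at
  least a vertices each, or every class is matched to a part it meets in at least a vertices,
  and counting shows that some class contains a vertex v outside its part X_i together with all
  but l*a vertices of X_i. Random extensions avoid both configurations. By Ramsey's theorem an
  a-set splits into about a/r disjoint homogeneous r-blocks. As T is thin, for any two
  homogeneity types some graph outside T splits into two homogeneous parts of these types; as T
  is meager, there is also one with a single-vertex part. Such a graph is planted into two blocks
  of different parts (or into v and one block) by prescribing at most r^2 cross pairs, and these
  events are independent for disjoint block pairs. So a fixed configuration survives with
  probability at most (1 - 2^(-r^2))^((a/r)^2), which beats the 4^n choices of two a-sets; for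
  the vertex case the blocks of X_i are put into l*a + 1 disjoint groups, one of which lies in
  the class of v.
*)

theory Submission
  imports Defs "HOL-Library.Ramsey" "HOL-Library.Disjoint_Sets" "HOL-Real_Asymp.Real_Asymp"
begin

section \<open>Induced subgraphs of hereditary families\<close>

lemma verts_induced [simp]: "verts (induced G U) = U"
  by (simp add: induced_def verts_def)

lemma edges_induced [simp]: "edges (induced G U) = {e \<in> edges G. e \<subseteq> U}"
  by (simp add: induced_def edges_def)

lemma graph_eqI: "verts G = verts H \<Longrightarrow> edges G = edges H \<Longrightarrow> G = H"
  by (metis edges_def prod_eq_iff verts_def)

lemma wf_graph_no_loop: "wf_graph G \<Longrightarrow> {x} \<notin> edges G"
  unfolding wf_graph_def by (metis doubleton_eq_iff insert_absorb2)

lemma hereditary_wf: "hereditary T \<Longrightarrow> G \<in> T \<Longrightarrow> wf_graph G"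
  unfolding hereditary_def by blast

lemma hereditary_induced: "hereditary T \<Longrightarrow> G \<in> T \<Longrightarrow> U \<subseteq> verts G \<Longrightarrow> induced G U \<in> T"
  unfolding hereditary_def by blast

lemma hereditary_nonmember_nonempty:
  assumes hT: "hereditary T" and "T \<noteq> {}" "wf_graph S" "S \<notin> T"
  shows "verts S \<noteq> {}"
proof
  assume empty: "verts S = {}"
  obtain G where G: "G \<in> T" using \<open>T \<noteq> {}\<close> by blast
  have "S = induced G {}"
    using empty \<open>wf_graph S\<close> hereditary_wf[OF hT G] by (intro graph_eqI) (auto simp: wf_graph_def)
  then show False using hereditary_induced[OF hT G] \<open>S \<notin> T\<close> by simp
qed

lemma induced_notin_if_embeds:
  assumes hT: "hereditary T" and "wf_graph H" "H \<notin> T"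
    and inj: "inj_on f (verts H)" and sub: "f ` verts H \<subseteq> Y"
    and adj: "\<forall>x\<in>verts H. \<forall>y\<in>verts H. {x, y} \<in> edges H \<longleftrightarrow> {f x, f y} \<in> edges G"
  shows "induced G Y \<notin> T"
proof
  assume "induced G Y \<in> T"
  then have image_in: "induced (induced G Y) (f ` verts H) \<in> T"
    using hereditary_induced[OF hT] sub by simp
  define g where "g = the_inv_into (verts H) f"
  have "graph_iso (induced (induced G Y) (f ` verts H)) H"
    unfolding graph_iso_def
  proof (intro exI[of _ g] conjI ballI)
    show "bij_betw g (verts (induced (induced G Y) (f ` verts H))) (verts H)"
      unfolding g_def using inj by (simp add: bij_betw_the_inv_into inj_on_imp_bij_betw)
  next
    fix x y assume "x \<in> verts (induced (induced G Y) (f ` verts H))"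
      "y \<in> verts (induced (induced G Y) (f ` verts H))"
    then obtain x' y' where "x' \<in> verts H" "y' \<in> verts H" "x = f x'" "y = f y'" by auto
    then show "{x, y} \<in> edges (induced (induced G Y) (f ` verts H)) \<longleftrightarrow> {g x, g y} \<in> edges H"
      using adj sub inj by (auto simp: g_def the_inv_into_f_f)
  qed
  then have "H \<in> T" using hT image_in \<open>wf_graph H\<close> unfolding hereditary_def by blast
  with \<open>H \<notin> T\<close> show False by simp
qed

section \<open>Homogeneous sets and forbidden splits\<close>

definition homogeneous :: "graph \<Rightarrow> bool \<Rightarrow> nat set \<Rightarrow> bool" where
  "homogeneous G \<tau> A \<longleftrightarrow> (\<forall>x\<in>A. \<forall>y\<in>A. x \<noteq> y \<longrightarrow> ({x, y} \<in> edges G \<longleftrightarrow> \<tau>))"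

lemma homogeneous_singleton [simp]: "homogeneous G \<tau> {c}"
  unfolding homogeneous_def by auto

lemma homogeneous_adj_iff:
  assumes "wf_graph F" "wf_graph G" "homogeneous F \<tau> U" "homogeneous G \<tau> C"
    and "inj_on f U" "f ` U \<subseteq> C" "z \<in> U" "w \<in> U"
  shows "{z, w} \<in> edges F \<longleftrightarrow> {f z, f w} \<in> edges G"
proof (cases "z = w")
  case True
  then show ?thesis using assms(1,2) by (simp add: wf_graph_no_loop)
next
  case False
  then have "f z \<noteq> f w" using assms(5,7,8) by (meson inj_onD)
  then show ?thesis using False assms(3-8) unfolding homogeneous_def by blast
qed

lemma ramsey_homogeneous:
  "\<exists>R. \<forall>H S. finite S \<longrightarrow> R \<le> card S \<longrightarrow> (\<exists>D\<subseteq>S. card D = r \<and> (\<exists>\<tau>. homogeneous H \<tau> D))"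
proof -
  obtain R where R: "\<forall>(V::nat set) (E::nat set set). finite V \<and> card V \<ge> R \<longrightarrow>
      (\<exists>D \<subseteq> V. card D = r \<and> Ramsey.clique D E \<or> card D = r \<and> Ramsey.indep D E)"
    using ramsey2[of r r] by blast
  have "homogeneous H True D" if "Ramsey.clique D (edges H)" for H D
    using that unfolding Ramsey.clique_def homogeneous_def by simp
  moreover have "homogeneous H False D" if "Ramsey.indep D (edges H)" for H D
    using that unfolding Ramsey.indep_def homogeneous_def by simp
  ultimately show ?thesis using R by meson
qed

definition forbidden_split :: "graph set \<Rightarrow> graph \<Rightarrow> nat set \<Rightarrow> nat set \<Rightarrow> bool \<Rightarrow> bool \<Rightarrow> bool" where
  "forbidden_split T F U1 U2 \<tau>1 \<tau>2 \<longleftrightarrow> wf_graph F \<and> F \<notin> T \<and> verts F = U1 \<union> U2 \<and>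
     U1 \<inter> U2 = {} \<and> homogeneous F \<tau>1 U1 \<and> homogeneous F \<tau>2 U2"

lemma forbidden_split_swap:
  "forbidden_split T F U1 U2 \<tau>1 \<tau>2 \<Longrightarrow> forbidden_split T F U2 U1 \<tau>2 \<tau>1"
  unfolding forbidden_split_def by blast

lemma forbidden_split_finite: "forbidden_split T F U1 U2 \<tau>1 \<tau>2 \<Longrightarrow> finite U1 \<and> finite U2"
  unfolding forbidden_split_def wf_graph_def by (metis finite_Un)

lemma thin_forbidden_split_Hst:
  fixes s :: nat
  assumes "thin T" "s \<le> 2"
  obtains F U1 U2 where "forbidden_split T F U1 U2 (s = 0) (s \<le> 1)"
proof -
  have "\<not> Hst s (2 - s) \<subseteq> T"
    using assms unfolding thin_def chi_c_le_def by (metis numeral_le_one_iff semiring_norm(69))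
  then obtain F A where F: "wf_graph F" "F \<notin> T" and A: "(\<Union>i<2. A i) = verts F"
      "\<forall>i<2. \<forall>j<2. i \<noteq> j \<longrightarrow> A i \<inter> A j = {}"
      "\<forall>i<s. independent_set F (A i)" "\<forall>i. s \<le> i \<and> i < 2 \<longrightarrow> Defs.clique F (A i)"
    unfolding Hst_def using \<open>s \<le> 2\<close> by auto
  have "{..<2::nat} = {0, 1}" by auto
  then have "verts F = A 0 \<union> A 1" "A 0 \<inter> A 1 = {}" using A(1,2) by auto
  moreover have "homogeneous F (s = 0) (A 0)"
  proof (cases "s = 0")
    case True
    then show ?thesis using A(4)[rule_format, of 0] unfolding homogeneous_def Defs.clique_def by auto
  next
    case False
    then show ?thesis using A(3) unfolding homogeneous_def independent_set_def by auto
  qed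
  moreover have "homogeneous F (s \<le> 1) (A 1)"
  proof (cases "s \<le> 1")
    case True
    then show ?thesis using A(4) unfolding homogeneous_def Defs.clique_def by auto
  next
    case False
    then show ?thesis using A(3)[rule_format, of 1] unfolding homogeneous_def independent_set_def by auto
  qed
  ultimately show ?thesis using F by (intro that[of F "A 0" "A 1"]) (simp add: forbidden_split_def)
qed

lemma thin_forbidden_split:
  assumes "thin T"
  obtains F U1 U2 where "forbidden_split T F U1 U2 \<tau>1 \<tau>2"
proof -
  define s :: nat where "s = (if \<tau>1 \<and> \<tau>2 then 0 else if \<tau>1 \<or> \<tau>2 then 1 else 2)"
  have "s \<le> 2" unfolding s_def by auto
  then obtain F U1 U2 where F: "forbidden_split T F U1 U2 (s = 0) (s \<le> 1)"
    by (rule thin_forbidden_split_Hst[OF assms])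
  show ?thesis
  proof (cases "\<tau>1 \<and> \<not> \<tau>2")
    case True
    then have "forbidden_split T F U2 U1 \<tau>1 \<tau>2" using forbidden_split_swap[OF F] unfolding s_def by simp
    then show ?thesis by (rule that)
  next
    case False
    then have "forbidden_split T F U1 U2 \<tau>1 \<tau>2" using F unfolding s_def by (cases \<tau>1; cases \<tau>2) simp_all
    then show ?thesis by (rule that)
  qed
qed

lemma substar_centre:
  assumes "substar S" "verts S \<noteq> {}"
  obtains c where "c \<in> verts S" "\<forall>x\<in>verts S - {c}. \<forall>y\<in>verts S - {c}. {x, y} \<notin> edges S"
proof -
  obtain v where v: "\<forall>e\<in>edges S. v \<in> e" using assms(1) unfolding substar_def by blast
  define c where "c = (if v \<in> verts S then v else (SOME x. x \<in> verts S))"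
  have "c \<in> verts S" unfolding c_def using assms(2) by (simp add: some_in_eq)
  moreover have "{x, y} \<notin> edges S" if "x \<in> verts S - {c}" "y \<in> verts S - {c}" for x y
    using v that unfolding c_def by (metis DiffE insertE singletonD singletonI)
  ultimately show ?thesis using that by blast
qed

lemma meager_forbidden_star_split:
  assumes "meager T"
  obtains F c U where "forbidden_split T F {c} U False \<tau>"
proof (cases "T = {}")
  case True
  then have "forbidden_split T ({0}, {}) {0} {} False \<tau>"
    unfolding forbidden_split_def wf_graph_def homogeneous_def by (simp add: verts_def edges_def)
  then show ?thesis by (rule that)
next
  case nonempty: False
  have hT: "hereditary T" using assms unfolding meager_def thin_def by blast
  have centred: "forbidden_split T S {c} (verts S - {c}) False \<tau>"
    if "wf_graph S" "S \<notin> T" "c \<in> verts S"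
      "\<forall>x\<in>verts S - {c}. \<forall>y\<in>verts S - {c}. x \<noteq> y \<longrightarrow> ({x, y} \<in> edges S \<longleftrightarrow> \<tau>)" for S c
    using that unfolding forbidden_split_def homogeneous_def by auto
  show ?thesis
  proof (cases \<tau>)
    case False
    obtain S where S: "substar S" "S \<notin> T" using assms unfolding meager_def by blast
    then have "wf_graph S" unfolding substar_def by blast
    then obtain c where "c \<in> verts S" "\<forall>x\<in>verts S - {c}. \<forall>y\<in>verts S - {c}. {x, y} \<notin> edges S"
      using substar_centre[OF S(1)] hereditary_nonmember_nonempty[OF hT nonempty _ S(2)] by blast
    then show ?thesis using centred[OF \<open>wf_graph S\<close> S(2)] False that by blast
  next
    case True
    obtain S where S: "antisubstar S" "S \<notin> T" using assms unfolding meager_def by blast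
    then have "wf_graph S" "substar (complement S)" unfolding antisubstar_def by blast+
    moreover have "verts (complement S) = verts S" by (simp add: complement_def verts_def)
    ultimately obtain c where "c \<in> verts S"
      "\<forall>x\<in>verts S - {c}. \<forall>y\<in>verts S - {c}. {x, y} \<notin> edges (complement S)"
      using substar_centre hereditary_nonmember_nonempty[OF hT nonempty _ S(2)] by metis
    then have "\<forall>x\<in>verts S - {c}. \<forall>y\<in>verts S - {c}. x \<noteq> y \<longrightarrow> {x, y} \<in> edges S"
      unfolding complement_def edges_def verts_def by auto
    then show ?thesis using centred[OF \<open>wf_graph S\<close> S(2) \<open>c \<in> verts S\<close>] True that by blast
  qed
qed

lemma disjoint_homogeneous_blocks:
  assumes ram: "\<forall>S. finite S \<longrightarrow> R \<le> card S \<longrightarrow> (\<exists>D\<subseteq>S. card D = r \<and> (\<exists>\<tau>. homogeneous H \<tau> D))"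
    and r: "r \<ge> 1" and fin: "finite S"
  shows "\<exists>Bs. (\<forall>D\<in>Bs. D \<subseteq> S \<and> card D = r \<and> (\<exists>\<tau>. homogeneous H \<tau> D)) \<and> disjoint Bs \<and>
    card S < r * card Bs + R \<and> finite Bs"
  using fin
proof (induction "card S" arbitrary: S rule: less_induct)
  case less
  show ?case
  proof (cases "card S < R")
    case True
    then show ?thesis by (intro exI[of _ "{}"]) auto
  next
    case False
    then obtain D where D: "D \<subseteq> S" "card D = r" "\<exists>\<tau>. homogeneous H \<tau> D"
      using ram less.prems by (meson not_less)
    have "D \<noteq> {}" using D(2) r by auto
    have "finite D" using D(1) less.prems by (rule finite_subset)
    moreover have "card D \<le> card S" using D(1) less.prems by (rule card_mono[rotated])
    ultimately have card_rest: "card (S - D) = card S - r" "card (S - D) < card S"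
      using D(1,2) r by (simp_all add: card_Diff_subset)
    then obtain Bs where Bs: "\<forall>E\<in>Bs. E \<subseteq> S - D \<and> card E = r \<and> (\<exists>\<tau>. homogeneous H \<tau> E)"
      "disjoint Bs" "card (S - D) < r * card Bs + R" "finite Bs"
      using less.hyps[of "S - D"] less.prems by blast
    have "D \<notin> Bs" using Bs(1) \<open>D \<noteq> {}\<close> by blast
    moreover have "disjoint (insert D Bs)"
      using Bs(1,2) by (auto simp: pairwise_insert disjnt_def)
    ultimately show ?thesis
      using Bs D card_rest False by (intro exI[of _ "insert D Bs"]) auto
  qed
qed

lemma disjoint_subsets_of_card:
  assumes "finite S" "g \<ge> 1" "L * g \<le> card S"
  shows "\<exists>Gs. Gs \<subseteq> Pow S \<and> card Gs = L \<and> (\<forall>x\<in>Gs. card x = g) \<and> disjoint Gs"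
  using assms
proof (induction L arbitrary: S)
  case 0
  then show ?case by (intro exI[of _ "{}"]) auto
next
  case (Suc L)
  then obtain x where x: "x \<subseteq> S" "card x = g" by (metis obtain_subset_with_card_n le_add1 mult_Suc le_trans)
  then have "finite x" "x \<noteq> {}" using Suc.prems(1,2) finite_subset by auto
  then have "L * g \<le> card (S - x)" using x Suc.prems(3) by (simp add: card_Diff_subset)
  then obtain Gs where Gs: "Gs \<subseteq> Pow (S - x)" "card Gs = L" "\<forall>y\<in>Gs. card y = g" "disjoint Gs"
    using Suc.IH[of "S - x"] Suc.prems by auto
  have "x \<notin> Gs" using Gs(1) \<open>x \<noteq> {}\<close> by blast
  moreover have "finite Gs" using Gs(1) Suc.prems(1) by (meson finite_Diff finite_Pow_iff finite_subset)
  moreover have "disjoint (insert x Gs)" using Gs(1,4) by (auto simp: pairwise_insert disjnt_def)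
  ultimately show ?case using Gs x by (intro exI[of _ "insert x Gs"]) auto
qed

lemma card_family_free_on:
  assumes P: "finite P" and Q: "Q \<subseteq> P" and R: "R \<subseteq> Q" and B: "B \<subseteq> Pow P"
    and free: "\<forall>E\<in>B. \<forall>E'. E' \<subseteq> P \<longrightarrow> E' - Q = E - Q \<longrightarrow> E' \<in> B"
  shows "card B = card {E\<in>B. E \<inter> Q = R} * 2 ^ card Q"
proof -
  define f where "f E = ((E - Q) \<union> R, E \<inter> Q)" for E
  define h where "h p = (fst p - Q) \<union> snd p" for p
  have free': "E - Q \<union> S \<in> B" if "E \<in> B" "S \<subseteq> Q" for E S
  proof -
    have "E - Q \<union> S \<subseteq> P" "E - Q \<union> S - Q = E - Q" using that B Q by auto
    then show ?thesis using free that(1) by blast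
  qed
  have "bij_betw f B ({E\<in>B. E \<inter> Q = R} \<times> Pow Q)"
    by (rule bij_betw_byWitness[where f' = h]) (use R in \<open>auto simp: f_def h_def intro: free'\<close>)
  then have "card B = card ({E\<in>B. E \<inter> Q = R} \<times> Pow Q)" by (rule bij_betw_same_card)
  also have "\<dots> = card {E\<in>B. E \<inter> Q = R} * 2 ^ card Q"
    using finite_subset[OF Q P] by (simp add: card_cartesian_product card_Pow)
  finally show ?thesis .
qed

definition pattern_avoiders :: "'a set \<Rightarrow> 'i set \<Rightarrow> ('i \<Rightarrow> 'a set) \<Rightarrow> ('i \<Rightarrow> 'a set) \<Rightarrow> 'a set set" where
  "pattern_avoiders P I Q R = {E \<in> Pow P. \<forall>s\<in>I. E \<inter> Q s \<noteq> R s}"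

(* A uniformly random E \<subseteq> P matches the pattern R s on Q s with probability 2^(-card (Q s)),
   independently for disjoint Q s. *)
lemma card_pattern_avoiders:
  assumes P: "finite P" and I: "finite I"
    and QR: "\<forall>s\<in>I. Q s \<subseteq> P \<and> R s \<subseteq> Q s \<and> card (Q s) \<le> K"
    and disj: "disjoint_family_on Q I"
  shows "real (card (pattern_avoiders P I Q R)) \<le> (1 - 1 / 2 ^ K) ^ card I * 2 ^ card P"
  using I QR disj
proof (induction I rule: finite_induct)
  case empty
  have "pattern_avoiders P {} Q R = Pow P" by (auto simp: pattern_avoiders_def)
  then show ?case using P by (simp add: card_Pow)
next
  case (insert s I)
  let ?B = "pattern_avoiders P I Q R"
  have IH: "real (card ?B) \<le> (1 - 1 / 2 ^ K) ^ card I * 2 ^ card P"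
    using insert by (auto simp: disjoint_family_on_def)
  have Qs: "Q s \<subseteq> P" "R s \<subseteq> Q s" "card (Q s) \<le> K" using insert.prems by auto
  have free: "\<forall>E\<in>?B. \<forall>E'. E' \<subseteq> P \<longrightarrow> E' - Q s = E - Q s \<longrightarrow> E' \<in> ?B"
  proof (intro ballI allI impI)
    fix E E' assume E: "E \<in> ?B" "E' \<subseteq> P" "E' - Q s = E - Q s"
    have "E' \<inter> Q t = E \<inter> Q t" if "t \<in> I" for t
    proof -
      have "t \<noteq> s" using that insert.hyps(2) by blast
      then have "Q t \<inter> Q s = {}"
        using insert.prems(2) that by (simp add: disjoint_family_on_def)
      then show ?thesis using E(3) by blast
    qed
    then show "E' \<in> ?B" using E unfolding pattern_avoiders_def by auto
  qed
  have sub: "?B \<subseteq> Pow P" unfolding pattern_avoiders_def by auto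
  then have "finite ?B" using P by (meson finite_Pow_iff finite_subset)
  have "pattern_avoiders P (insert s I) Q R = ?B - {E\<in>?B. E \<inter> Q s = R s}"
    unfolding pattern_avoiders_def by auto
  then have "card (pattern_avoiders P (insert s I) Q R) = card ?B - card {E\<in>?B. E \<inter> Q s = R s}"
    using \<open>finite ?B\<close> by (simp add: card_Diff_subset)
  then have "real (card (pattern_avoiders P (insert s I) Q R)) = real (card ?B) * (1 - 1 / 2 ^ card (Q s))"
    using card_family_free_on[OF P Qs(1,2) sub free] by (simp add: of_nat_diff field_simps)
  also have "\<dots> \<le> real (card ?B) * (1 - 1 / 2 ^ K)"
    using Qs(3) by (intro mult_left_mono) (auto simp: field_simps)
  also have "\<dots> \<le> (1 - 1 / 2 ^ K) ^ card I * 2 ^ card P * (1 - 1 / 2 ^ K)"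
    using IH by (intro mult_right_mono) (auto simp: field_simps)
  also have "\<dots> = (1 - 1 / 2 ^ K) ^ card (insert s I) * 2 ^ card P"
    using insert.hyps by simp
  finally show ?case .
qed

lemma group_inside_if_few_missing:
  assumes Bs: "disjoint Bs" "\<Union>Bs \<subseteq> S" and Gs: "Gs \<subseteq> Pow Bs" "disjoint Gs"
    and "finite S" and few: "card (S - W) < card Gs"
  shows "\<exists>grp\<in>Gs. \<Union>grp \<subseteq> W"
proof (rule ccontr)
  assume "\<not> ?thesis"
  then have "\<forall>grp\<in>Gs. \<exists>y. y \<in> \<Union>grp - W" by blast
  from bchoice[OF this] obtain x where x: "\<forall>grp\<in>Gs. x grp \<in> \<Union>grp - W" by blast
  have "inj_on x Gs"
  proof (rule inj_onI)
    fix g1 g2 assume g: "g1 \<in> Gs" "g2 \<in> Gs" "x g1 = x g2"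
    obtain D1 D2 where D: "D1 \<in> g1" "D2 \<in> g2" "x g1 \<in> D1" "x g2 \<in> D2"
      using x g(1,2) by blast
    have "D1 \<in> Bs" "D2 \<in> Bs" using Gs(1) g(1,2) D(1,2) by auto
    moreover have "D1 \<inter> D2 \<noteq> {}" using D(3,4) g(3) by auto
    ultimately have "D1 = D2" using disjointD[OF Bs(1)] by blast
    then have "g1 \<inter> g2 \<noteq> {}" using D(1,2) by blast
    then show "g1 = g2" using disjointD[OF Gs(2) g(1,2)] by blast
  qed
  moreover have "x ` Gs \<subseteq> S - W"
  proof
    fix y assume "y \<in> x ` Gs"
    then obtain grp where "grp \<in> Gs" "y = x grp" by blast
    moreover have "\<Union>grp \<subseteq> S" using \<open>grp \<in> Gs\<close> Gs(1) Bs(2) by blast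
    ultimately show "y \<in> S - W" using x by blast
  qed
  ultimately have "card Gs \<le> card (S - W)" using \<open>finite S\<close> by (metis card_inj_on_le finite_Diff)
  with few show False by simp
qed

lemma large_intersection_exists:
  assumes "0 < l" "finite X" "X \<subseteq> (\<Union>j<l. Y j)" "l * a \<le> card X"
  shows "\<exists>j<l. a \<le> card (Y j \<inter> X)"
proof (rule ccontr)
  assume small: "\<not> ?thesis"
  have "X = (\<Union>j<l. Y j \<inter> X)" using assms(3) by blast
  then have "card X \<le> (\<Sum>j<l. card (Y j \<inter> X))" by (metis card_UN_le finite_lessThan)
  also have "\<dots> < (\<Sum>j<l. a)" using small assms(1) by (intro sum_strict_mono) auto
  finally show False using assms(4) by simp
qed

definition cross :: "nat set \<Rightarrow> nat set \<Rightarrow> nat set set" where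
  "cross C D = {{x, y} | x y. x \<in> C \<and> y \<in> D}"

lemma cross_disjoint:
  assumes "C \<inter> C' = {} \<or> D \<inter> D' = {}" "(C \<union> C') \<inter> (D \<union> D') = {}"
  shows "cross C D \<inter> cross C' D' = {}"
proof -
  have False if "x \<in> C" "y \<in> D" "x' \<in> C'" "y' \<in> D'" "{x, y} = {x', y'}" for x y x' y'
  proof -
    from that(5) have "(x = x' \<and> y = y') \<or> (x = y' \<and> y = x')" by (simp add: doubleton_eq_iff)
    then show False using assms that(1-4) by blast
  qed
  then show ?thesis unfolding cross_def by blast
qed

section \<open>Planting a forbidden split\<close>

definition pattern_pairs :: "(nat \<Rightarrow> nat) \<Rightarrow> (nat \<Rightarrow> nat) \<Rightarrow> nat set \<Rightarrow> nat set \<Rightarrow> nat set set" where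
  "pattern_pairs \<phi> \<psi> U1 U2 = {{\<phi> x, \<psi> y} | x y. x \<in> U1 \<and> y \<in> U2}"

definition pattern_edges :: "graph \<Rightarrow> (nat \<Rightarrow> nat) \<Rightarrow> (nat \<Rightarrow> nat) \<Rightarrow> nat set \<Rightarrow> nat set \<Rightarrow> nat set set" where
  "pattern_edges F \<phi> \<psi> U1 U2 = {{\<phi> x, \<psi> y} | x y. x \<in> U1 \<and> y \<in> U2 \<and> {x, y} \<in> edges F}"

lemma pattern_edges_subset: "pattern_edges F \<phi> \<psi> U1 U2 \<subseteq> pattern_pairs \<phi> \<psi> U1 U2"
  unfolding pattern_edges_def pattern_pairs_def by blast

lemma pattern_pairs_subset_cross: "\<phi> ` U1 \<subseteq> C \<Longrightarrow> \<psi> ` U2 \<subseteq> D \<Longrightarrow> pattern_pairs \<phi> \<psi> U1 U2 \<subseteq> cross C D"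
  unfolding pattern_pairs_def cross_def by blast

lemma card_pattern_pairs:
  assumes "finite U1" "finite U2"
  shows "card (pattern_pairs \<phi> \<psi> U1 U2) \<le> card U1 * card U2"
proof -
  have "pattern_pairs \<phi> \<psi> U1 U2 = (\<lambda>p. {\<phi> (fst p), \<psi> (snd p)}) ` (U1 \<times> U2)"
    unfolding pattern_pairs_def by force
  moreover have "card ((\<lambda>p. {\<phi> (fst p), \<psi> (snd p)}) ` (U1 \<times> U2)) \<le> card (U1 \<times> U2)"
    by (rule card_image_le) (simp add: assms)
  ultimately show ?thesis by (simp add: card_cartesian_product)
qed

lemma matches_pattern_iff:
  assumes \<phi>: "inj_on \<phi> U1" and \<psi>: "inj_on \<psi> U2" and disj: "\<phi> ` U1 \<inter> \<psi> ` U2 = {}"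
    and xy: "x \<in> U1" "y \<in> U2"
    and E: "E \<inter> pattern_pairs \<phi> \<psi> U1 U2 = pattern_edges F \<phi> \<psi> U1 U2"
  shows "{\<phi> x, \<psi> y} \<in> E \<longleftrightarrow> {x, y} \<in> edges F"
proof -
  have "{\<phi> x, \<psi> y} \<in> pattern_pairs \<phi> \<psi> U1 U2"
    using xy unfolding pattern_pairs_def by blast
  then have "{\<phi> x, \<psi> y} \<in> E \<longleftrightarrow> {\<phi> x, \<psi> y} \<in> pattern_edges F \<phi> \<psi> U1 U2"
    using E by (metis IntD1 IntI)
  also have "\<dots> \<longleftrightarrow> {x, y} \<in> edges F"
  proof
    assume "{\<phi> x, \<psi> y} \<in> pattern_edges F \<phi> \<psi> U1 U2"
    then obtain x' y' where x'y': "{\<phi> x, \<psi> y} = {\<phi> x', \<psi> y'}" "x' \<in> U1" "y' \<in> U2"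
        "{x', y'} \<in> edges F"
      unfolding pattern_edges_def by blast
    from x'y'(1) have "(\<phi> x = \<phi> x' \<and> \<psi> y = \<psi> y') \<or> (\<phi> x = \<psi> y' \<and> \<psi> y = \<phi> x')"
      by (simp add: doubleton_eq_iff)
    moreover have "\<phi> x \<noteq> \<psi> y'" using disj xy(1) x'y'(3) by blast
    ultimately have "\<phi> x = \<phi> x'" "\<psi> y = \<psi> y'" by auto
    then have "x = x'" "y = y'" using \<phi> \<psi> xy x'y'(2,3) by (auto dest: inj_onD)
    then show "{x, y} \<in> edges F" using x'y'(4) by simp
  next
    assume "{x, y} \<in> edges F"
    then show "{\<phi> x, \<psi> y} \<in> pattern_edges F \<phi> \<psi> U1 U2"
      using xy unfolding pattern_edges_def by blast
  qed
  finally show ?thesis .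
qed

lemma induced_notin_if_embeds_split:
  assumes hT: "hereditary T" and wfG: "wf_graph G" and F: "forbidden_split T F U1 U2 \<tau>1 \<tau>2"
    and \<phi>: "inj_on \<phi> U1" "\<phi> ` U1 \<subseteq> C" and \<psi>: "inj_on \<psi> U2" "\<psi> ` U2 \<subseteq> D" and CD: "C \<inter> D = {}"
    and hC: "homogeneous G \<tau>1 C" and hD: "homogeneous G \<tau>2 D"
    and across: "\<And>x y. x \<in> U1 \<Longrightarrow> y \<in> U2 \<Longrightarrow> {\<phi> x, \<psi> y} \<in> edges G \<longleftrightarrow> {x, y} \<in> edges F"
    and Y: "C \<union> D \<subseteq> Y"
  shows "induced G Y \<notin> T"
proof -
  have wfF: "wf_graph F" and "F \<notin> T" and vF: "verts F = U1 \<union> U2" and U: "U1 \<inter> U2 = {}"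
    and hU1: "homogeneous F \<tau>1 U1" and hU2: "homogeneous F \<tau>2 U2"
    using F unfolding forbidden_split_def by auto
  define f where "f z = (if z \<in> U1 then \<phi> z else \<psi> z)" for z
  have f1: "inj_on f U1" "f ` U1 \<subseteq> C" using \<phi> by (auto simp: f_def inj_on_def)
  have f2: "inj_on f U2" "f ` U2 \<subseteq> D" using \<psi> U by (auto simp: f_def inj_on_def)
  have "inj_on f (verts F)"
    unfolding vF inj_on_Un using f1 f2 CD by blast
  moreover have "f ` verts F \<subseteq> Y" using f1(2) f2(2) vF Y by auto
  moreover have "\<forall>z\<in>verts F. \<forall>w\<in>verts F. {z, w} \<in> edges F \<longleftrightarrow> {f z, f w} \<in> edges G"
  proof (intro ballI)
    fix z w assume "z \<in> verts F" "w \<in> verts F"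
    then consider "z \<in> U1" "w \<in> U1" | "z \<in> U1" "w \<in> U2" | "z \<in> U2" "w \<in> U1" | "z \<in> U2" "w \<in> U2"
      using vF by blast
    then show "{z, w} \<in> edges F \<longleftrightarrow> {f z, f w} \<in> edges G"
    proof cases
      case 1
      then show ?thesis using homogeneous_adj_iff[OF wfF wfG hU1 hC f1] by blast
    next
      case 2
      then show ?thesis using across[of z w] U by (auto simp: f_def)
    next
      case 3
      then show ?thesis using across[of w z] U by (auto simp: f_def insert_commute)
    next
      case 4
      then show ?thesis using homogeneous_adj_iff[OF wfF wfG hU2 hD f2] by blast
    qed
  qed
  ultimately show ?thesis using induced_notin_if_embeds[OF hT wfF \<open>F \<notin> T\<close>] by blast
qed

definition injection_into :: "nat set \<Rightarrow> nat set \<Rightarrow> nat \<Rightarrow> nat" where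
  "injection_into U C = (SOME f. inj_on f U \<and> f ` U \<subseteq> C)"

lemma injection_into_spec:
  assumes "finite U" "finite C" "card U \<le> card C"
  shows "inj_on (injection_into U C) U" "injection_into U C ` U \<subseteq> C"
proof -
  have "\<exists>f. inj_on f U \<and> f ` U \<subseteq> C" using card_le_inj[OF assms] by blast
  then have "inj_on (injection_into U C) U \<and> injection_into U C ` U \<subseteq> C"
    unfolding injection_into_def by (rule someI_ex)
  then show "inj_on (injection_into U C) U" "injection_into U C ` U \<subseteq> C" by auto
qed

definition split_slots :: "nat set \<Rightarrow> nat set \<Rightarrow> nat set \<Rightarrow> nat set \<Rightarrow> nat set set" where
  "split_slots U1 U2 C D = pattern_pairs (injection_into U1 C) (injection_into U2 D) U1 U2"

definition split_target :: "graph \<Rightarrow> nat set \<Rightarrow> nat set \<Rightarrow> nat set \<Rightarrow> nat set \<Rightarrow> nat set set" where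
  "split_target F U1 U2 C D = pattern_edges F (injection_into U1 C) (injection_into U2 D) U1 U2"

lemma split_target_subset: "split_target F U1 U2 C D \<subseteq> split_slots U1 U2 C D"
  unfolding split_target_def split_slots_def by (rule pattern_edges_subset)

lemma split_slots_subset_cross:
  assumes "finite U1" "finite U2" "finite C" "finite D" "card U1 \<le> card C" "card U2 \<le> card D"
  shows "split_slots U1 U2 C D \<subseteq> cross C D"
  unfolding split_slots_def
  using pattern_pairs_subset_cross injection_into_spec(2) assms by metis

lemma card_split_slots:
  assumes "finite U1" "finite U2"
  shows "card (split_slots U1 U2 C D) \<le> card U1 * card U2"
  unfolding split_slots_def using card_pattern_pairs[OF assms] .

section \<open>Extensions of vertex-disjoint graphs\<close>

locale extension_setting =
  fixes T :: "graph set" and l n :: nat and Gs :: "nat \<Rightarrow> graph"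
  assumes hereditary: "hereditary T"
    and parts_in: "\<forall>i<l. wf_graph (Gs i) \<and> Gs i \<in> T"
    and parts_disjoint: "\<forall>i<l. \<forall>j<l. i \<noteq> j \<longrightarrow> verts (Gs i) \<inter> verts (Gs j) = {}"
    and parts_cover: "(\<Union>i<l. verts (Gs i)) = {1..n}"
begin

abbreviation X :: "nat \<Rightarrow> nat set" where "X i \<equiv> verts (Gs i)"

definition V :: "nat set" where "V = {1..n}"

definition part_edges :: "nat set set" where "part_edges = (\<Union>i<l. edges (Gs i))"

definition cross_pairs :: "nat set set" where
  "cross_pairs = {{x, y} | x y. \<exists>i<l. \<exists>k<l. i \<noteq> k \<and> x \<in> X i \<and> y \<in> X k}"

definition extension :: "nat set set \<Rightarrow> graph" where "extension E = (V, part_edges \<union> E)"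

lemma verts_extension [simp]: "verts (extension E) = V"
  by (simp add: extension_def verts_def)

lemma edges_extension [simp]: "edges (extension E) = part_edges \<union> E"
  by (simp add: extension_def edges_def)

lemma wf_part: "i < l \<Longrightarrow> wf_graph (Gs i)"
  using parts_in by blast

lemma finite_part: "i < l \<Longrightarrow> finite (X i)"
  using wf_part wf_graph_def by blast

lemma part_subset_V: "i < l \<Longrightarrow> X i \<subseteq> V"
  using parts_cover V_def by blast

lemma finite_V: "finite V"
  by (simp add: V_def)

lemma card_V: "card V = n"
  by (simp add: V_def)

lemma part_of_vertex: "v \<in> V \<Longrightarrow> \<exists>i<l. v \<in> X i"
  using parts_cover V_def by blast

lemma part_unique: "i < l \<Longrightarrow> j < l \<Longrightarrow> x \<in> X i \<Longrightarrow> x \<in> X j \<Longrightarrow> i = j"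
  using parts_disjoint by blast

lemma part_edge: "i < l \<Longrightarrow> e \<in> edges (Gs i) \<Longrightarrow> \<exists>x y. x \<noteq> y \<and> e = {x, y} \<and> x \<in> X i \<and> y \<in> X i"
  using wf_part unfolding wf_graph_def by blast

lemma cross_pair_in: "k < l \<Longrightarrow> i < l \<Longrightarrow> k \<noteq> i \<Longrightarrow> x \<in> X k \<Longrightarrow> y \<in> X i \<Longrightarrow> {x, y} \<in> cross_pairs"
  unfolding cross_pairs_def by blast

lemma cross_subset_cross_pairs:
  "k < l \<Longrightarrow> i < l \<Longrightarrow> k \<noteq> i \<Longrightarrow> C \<subseteq> X k \<Longrightarrow> D \<subseteq> X i \<Longrightarrow> cross C D \<subseteq> cross_pairs"
  unfolding cross_def using cross_pair_in by blast

lemma cross_pair_not_in_part: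
  assumes "e \<in> cross_pairs" "i < l"
  shows "\<not> e \<subseteq> X i"
proof
  assume sub: "e \<subseteq> X i"
  obtain x y j k where xy: "e = {x, y}" "j < l" "k < l" "j \<noteq> k" "x \<in> X j" "y \<in> X k"
    using assms(1) unfolding cross_pairs_def by blast
  have "x \<in> X i" "y \<in> X i" using sub xy(1) by auto
  then have "j = i" "k = i" using part_unique[OF xy(2) assms(2) xy(5)] part_unique[OF xy(3) assms(2) xy(6)] by auto
  then show False using xy(4) by simp
qed

lemma finite_cross_pairs: "finite cross_pairs"
proof -
  have "cross_pairs \<subseteq> Pow V" unfolding cross_pairs_def using part_subset_V by blast
  then show ?thesis using finite_V by (meson finite_Pow_iff finite_subset)
qed

lemma part_edges_cross_pairs_disjoint: "part_edges \<inter> cross_pairs = {}"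
proof -
  have "e \<notin> cross_pairs" if "e \<in> part_edges" for e
  proof -
    from that obtain i where i: "i < l" "e \<in> edges (Gs i)" unfolding part_edges_def by blast
    then have "e \<subseteq> X i" using part_edge by blast
    then show ?thesis using cross_pair_not_in_part i(1) by blast
  qed
  then show ?thesis by blast
qed

lemma induced_extension_part:
  assumes "E \<subseteq> cross_pairs" "i < l"
  shows "induced (extension E) (X i) = Gs i"
proof (rule graph_eqI)
  show "verts (induced (extension E) (X i)) = verts (Gs i)" by simp
  have "e \<in> edges (Gs i)" if e: "e \<in> part_edges \<union> E" "e \<subseteq> X i" for e
  proof (cases "e \<in> part_edges")
    case True
    then obtain j where j: "j < l" "e \<in> edges (Gs j)" unfolding part_edges_def by blast
    then obtain x y where "e = {x, y}" "x \<in> X j" using part_edge by blast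
    then have "j = i" using part_unique[OF j(1) assms(2)] e(2) by blast
    then show ?thesis using j by simp
  next
    case False
    then show ?thesis using e assms cross_pair_not_in_part by blast
  qed
  moreover have "e \<in> part_edges \<and> e \<subseteq> X i" if "e \<in> edges (Gs i)" for e
    using that assms(2) part_edge[OF assms(2) that] unfolding part_edges_def by blast
  ultimately show "edges (induced (extension E) (X i)) = edges (Gs i)" by auto
qed

lemma wf_extension:
  assumes "E \<subseteq> cross_pairs"
  shows "wf_graph (extension E)"
  unfolding wf_graph_def
proof (intro conjI ballI)
  show "finite (verts (extension E))" using finite_V by simp
  fix e assume "e \<in> edges (extension E)"
  then have "e \<in> part_edges \<or> e \<in> cross_pairs" using assms by auto
  then consider j where "j < l" "e \<in> edges (Gs j)" | "e \<in> cross_pairs"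
    unfolding part_edges_def by blast
  then show "\<exists>x y. x \<noteq> y \<and> e = {x, y} \<and> x \<in> verts (extension E) \<and> y \<in> verts (extension E)"
  proof cases
    case 1
    then show ?thesis using part_edge[OF 1] part_subset_V[OF 1(1)] by auto
  next
    case 2
    then obtain x y i k where xy: "e = {x, y}" "i < l" "k < l" "i \<noteq> k" "x \<in> X i" "y \<in> X k"
      unfolding cross_pairs_def by blast
    have "x \<noteq> y" using part_unique xy by blast
    then show ?thesis using xy part_subset_V by auto
  qed
qed

lemma extension_eq:
  assumes "G \<in> extensions l Gs"
  shows "G = extension (edges G \<inter> cross_pairs)"
proof (rule graph_eqI)
  have wf: "wf_graph G" and vG: "verts G = V" and ind: "\<forall>i<l. induced G (X i) = Gs i"
    using assms parts_cover unfolding extensions_def V_def by auto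
  show "verts G = verts (extension (edges G \<inter> cross_pairs))" using vG by simp
  have "e \<in> part_edges \<or> e \<in> cross_pairs" if e: "e \<in> edges G" for e
  proof -
    obtain x y where xy: "e = {x, y}" "x \<in> V" "y \<in> V" using wf e vG unfolding wf_graph_def by blast
    obtain i k where ik: "i < l" "k < l" "x \<in> X i" "y \<in> X k" using part_of_vertex xy by blast
    show ?thesis
    proof (cases "i = k")
      case True
      then have "e \<in> edges (induced G (X i))" using e xy ik by simp
      then show ?thesis using ind ik(1) unfolding part_edges_def by auto
    next
      case False
      then show ?thesis using cross_pair_in ik xy by metis
    qed
  qed
  moreover have "e \<in> edges G" if e: "e \<in> part_edges" for e
  proof -
    obtain i where "i < l" "e \<in> edges (Gs i)" using e unfolding part_edges_def by blast
    then have "e \<in> edges (induced G (X i))" using ind by simp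
    then show ?thesis by simp
  qed
  ultimately show "edges G = edges (extension (edges G \<inter> cross_pairs))" by auto
qed

lemma extensions_eq_image: "extensions l Gs = extension ` Pow cross_pairs"
proof
  show "extensions l Gs \<subseteq> extension ` Pow cross_pairs" using extension_eq by blast
  show "extension ` Pow cross_pairs \<subseteq> extensions l Gs"
    unfolding extensions_def using wf_extension induced_extension_part parts_cover V_def by auto
qed

lemma inj_on_extension: "inj_on extension (Pow cross_pairs)"
proof (rule inj_onI)
  fix E E' assume "E \<in> Pow cross_pairs" "E' \<in> Pow cross_pairs" "extension E = extension E'"
  then have "(part_edges \<union> E) \<inter> cross_pairs = (part_edges \<union> E') \<inter> cross_pairs"
    by (metis edges_extension)
  then show "E = E'"
    using part_edges_cross_pairs_disjoint \<open>E \<in> Pow cross_pairs\<close> \<open>E' \<in> Pow cross_pairs\<close> by blast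
qed

lemma card_extensions: "card (extensions l Gs) = 2 ^ card cross_pairs"
  using extensions_eq_image inj_on_extension finite_cross_pairs by (simp add: card_image card_Pow)

lemma card_extensions_such_that:
  "card {G \<in> extensions l Gs. Q G} = card {E \<in> Pow cross_pairs. Q (extension E)}"
proof -
  have "{G \<in> extensions l Gs. Q G} = extension ` {E \<in> Pow cross_pairs. Q (extension E)}"
    using extensions_eq_image by auto
  moreover have "inj_on extension {E \<in> Pow cross_pairs. Q (extension E)}"
    using inj_on_extension by (rule inj_on_subset) auto
  ultimately show ?thesis by (simp add: card_image)
qed

lemma extension_adj_within:
  assumes "E \<subseteq> cross_pairs" "i < l" "x \<in> X i" "y \<in> X i"
  shows "{x, y} \<in> edges (extension E) \<longleftrightarrow> {x, y} \<in> edges (Gs i)"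
proof -
  have "edges (induced (extension E) (X i)) = edges (Gs i)"
    using induced_extension_part[OF assms(1,2)] by simp
  then show ?thesis using assms(3,4) by auto
qed

lemma extension_adj_across:
  assumes "k < l" "i < l" "k \<noteq> i" "x \<in> X k" "y \<in> X i"
  shows "{x, y} \<in> edges (extension E) \<longleftrightarrow> {x, y} \<in> E"
  using cross_pair_in[OF assms] part_edges_cross_pairs_disjoint by auto

lemma homogeneous_extension:
  assumes "E \<subseteq> cross_pairs" "k < l" "C \<subseteq> X k" "homogeneous (Gs k) \<tau> C"
  shows "homogeneous (extension E) \<tau> C"
  unfolding homogeneous_def
proof (intro ballI impI)
  fix x y assume "x \<in> C" "y \<in> C" "x \<noteq> y"
  then show "{x, y} \<in> edges (extension E) \<longleftrightarrow> \<tau>"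
    using assms extension_adj_within[OF assms(1,2)] unfolding homogeneous_def by blast
qed

lemma extension_induced_notin:
  assumes E: "E \<subseteq> cross_pairs" and ki: "k < l" "i < l" "k \<noteq> i" and CD: "C \<subseteq> X k" "D \<subseteq> X i"
    and hC: "homogeneous (Gs k) \<tau>1 C" and hD: "homogeneous (Gs i) \<tau>2 D"
    and F: "forbidden_split T F U1 U2 \<tau>1 \<tau>2"
    and \<phi>: "inj_on \<phi> U1" "\<phi> ` U1 \<subseteq> C" and \<psi>: "inj_on \<psi> U2" "\<psi> ` U2 \<subseteq> D"
    and match: "E \<inter> pattern_pairs \<phi> \<psi> U1 U2 = pattern_edges F \<phi> \<psi> U1 U2"
    and Y: "C \<union> D \<subseteq> Y"
  shows "induced (extension E) Y \<notin> T"
proof (rule induced_notin_if_embeds_split[OF hereditary wf_extension[OF E] F \<phi> \<psi> _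
      homogeneous_extension[OF E ki(1) CD(1) hC] homogeneous_extension[OF E ki(2) CD(2) hD] _ Y])
  show "C \<inter> D = {}" using CD ki parts_disjoint by blast
  then have "\<phi> ` U1 \<inter> \<psi> ` U2 = {}" using \<phi>(2) \<psi>(2) by blast
  show "{\<phi> x, \<psi> y} \<in> edges (extension E) \<longleftrightarrow> {x, y} \<in> edges F" if "x \<in> U1" "y \<in> U2" for x y
  proof -
    have "\<phi> x \<in> X k" "\<psi> y \<in> X i" using that \<phi>(2) \<psi>(2) CD by auto
    then have "{\<phi> x, \<psi> y} \<in> edges (extension E) \<longleftrightarrow> {\<phi> x, \<psi> y} \<in> E"
      by (rule extension_adj_across[OF ki])
    also have "\<dots> \<longleftrightarrow> {x, y} \<in> edges F"
      by (rule matches_pattern_iff[OF \<phi>(1) \<psi>(1) \<open>\<phi> ` U1 \<inter> \<psi> ` U2 = {}\<close> that match])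
    finally show ?thesis .
  qed
qed

lemma extension_induced_notin_split:
  assumes E: "E \<subseteq> cross_pairs" and ki: "k < l" "i < l" "k \<noteq> i" and CD: "C \<subseteq> X k" "D \<subseteq> X i"
    and hC: "homogeneous (Gs k) \<tau>1 C" and hD: "homogeneous (Gs i) \<tau>2 D"
    and F: "forbidden_split T F U1 U2 \<tau>1 \<tau>2" and U: "card U1 \<le> card C" "card U2 \<le> card D"
    and match: "E \<inter> split_slots U1 U2 C D = split_target F U1 U2 C D"
    and Y: "C \<union> D \<subseteq> Y"
  shows "induced (extension E) Y \<notin> T"
proof -
  have fin: "finite U1" "finite U2" "finite C" "finite D"
    using forbidden_split_finite[OF F] finite_subset[OF CD(1) finite_part[OF ki(1)]]
      finite_subset[OF CD(2) finite_part[OF ki(2)]] by auto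
  show ?thesis
    using extension_induced_notin[OF E ki CD hC hD F injection_into_spec[OF fin(1,3) U(1)]
        injection_into_spec[OF fin(2,4) U(2)] match[unfolded split_slots_def split_target_def] Y] .
qed

section \<open>Uniqueness of the partition\<close>

definition two_parts_forbidden :: "nat \<Rightarrow> nat set set \<Rightarrow> bool" where
  "two_parts_forbidden a E \<longleftrightarrow> (\<forall>k<l. \<forall>i<l. k \<noteq> i \<longrightarrow> (\<forall>A B Y. A \<subseteq> X k \<longrightarrow> B \<subseteq> X i \<longrightarrow>
     a \<le> card A \<longrightarrow> a \<le> card B \<longrightarrow> A \<union> B \<subseteq> Y \<longrightarrow> induced (extension E) Y \<notin> T))"

definition near_part_forbidden :: "nat \<Rightarrow> nat set set \<Rightarrow> bool" where
  "near_part_forbidden a E \<longleftrightarrow> (\<forall>i<l. \<forall>v\<in>V - X i. \<forall>W Y. W \<subseteq> X i \<longrightarrow> card (X i - W) \<le> l * a \<longrightarrow>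
     insert v W \<subseteq> Y \<longrightarrow> induced (extension E) Y \<notin> T)"

lemma parts_Tl_partition:
  assumes "E \<subseteq> cross_pairs"
  shows "Tl_partition T l (extension E) X"
  unfolding Tl_partition_def
proof (intro conjI allI impI)
  show "(\<Union>i<l. X i) = verts (extension E)" using parts_cover V_def by simp
  fix i assume "i < l"
  then show "induced (extension E) (X i) \<in> T" using induced_extension_part[OF assms] parts_in by simp
  fix j assume "j < l" "i \<noteq> j"
  then show "X i \<inter> X j = {}" using parts_disjoint \<open>i < l\<close> by blast
qed

lemma Tl_partition_matching:
  assumes two: "two_parts_forbidden a E" and big: "\<forall>k<l. l * a \<le> card (X k)"
    and Y: "Tl_partition T l (extension E) Y"
  obtains \<sigma> where "inj_on \<sigma> {..<l}" "\<sigma> ` {..<l} = {..<l}"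
    "\<And>i j. i < l \<Longrightarrow> j < l \<Longrightarrow> j \<noteq> \<sigma> i \<Longrightarrow> card (Y j \<inter> X i) < a"
proof -
  have YV: "(\<Union>j<l. Y j) = V" and YT: "\<forall>j<l. induced (extension E) (Y j) \<in> T"
    using Y unfolding Tl_partition_def by auto
  have not_two_large: False
    if "j < l" "k < l" "i < l" "k \<noteq> i" "a \<le> card (Y j \<inter> X k)" "a \<le> card (Y j \<inter> X i)" for j k i
  proof -
    have "induced (extension E) (Y j) \<notin> T"
      by (rule two[unfolded two_parts_forbidden_def, rule_format, of k i "Y j \<inter> X k" "Y j \<inter> X i" "Y j"])
        (use that in auto)
    then show False using YT that(1) by blast
  qed
  define \<sigma> where "\<sigma> k = (SOME j. j < l \<and> a \<le> card (Y j \<inter> X k))" for k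
  have large: "\<exists>j<l. a \<le> card (Y j \<inter> X k)" if "k < l" for k
    using large_intersection_exists[of l "X k" Y a] that finite_part part_subset_V YV big by auto
  have \<sigma>: "\<sigma> k < l" "a \<le> card (Y (\<sigma> k) \<inter> X k)" if "k < l" for k
    using someI_ex[OF large[OF that]] unfolding \<sigma>_def by auto
  have inj: "inj_on \<sigma> {..<l}"
  proof (rule inj_onI)
    fix k i assume "k \<in> {..<l}" "i \<in> {..<l}" "\<sigma> k = \<sigma> i"
    then show "k = i" using not_two_large[of "\<sigma> k" k i] \<sigma>[of k] \<sigma>[of i] by auto
  qed
  moreover have surj: "\<sigma> ` {..<l} = {..<l}"
    using \<sigma>(1) inj by (intro endo_inj_surj) auto
  moreover have "card (Y j \<inter> X i) < a" if "i < l" "j < l" "j \<noteq> \<sigma> i" for i j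
  proof -
    have "j \<in> \<sigma> ` {..<l}" using surj \<open>j < l\<close> by simp
    then obtain i' where "i' < l" "j = \<sigma> i'" by blast
    moreover have "i' \<noteq> i" using calculation that(3) by blast
    ultimately show ?thesis using not_two_large[of j i' i] \<sigma>[of i'] that(1) by (meson not_le)
  qed
  ultimately show ?thesis using that by blast
qed

lemma part_subset_matched_class:
  assumes near: "near_part_forbidden a E" and Y: "Tl_partition T l (extension E) Y"
    and surj: "\<sigma> ` {..<l} = {..<l}"
    and small: "\<And>i j. i < l \<Longrightarrow> j < l \<Longrightarrow> j \<noteq> \<sigma> i \<Longrightarrow> card (Y j \<inter> X i) < a"
    and k: "k < l"
  shows "X k \<subseteq> Y (\<sigma> k)"
proof
  have YV: "(\<Union>j<l. Y j) = V" and YT: "\<forall>j<l. induced (extension E) (Y j) \<in> T"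
    using Y unfolding Tl_partition_def by auto
  fix v assume v: "v \<in> X k"
  then obtain j where j: "j < l" "v \<in> Y j" using part_subset_V[OF k] YV by blast
  then have "j \<in> \<sigma> ` {..<l}" using surj by simp
  then obtain i where i: "i < l" "j = \<sigma> i" by blast
  show "v \<in> Y (\<sigma> k)"
  proof (cases "i = k")
    case True
    then show ?thesis using i j by simp
  next
    case False
    have "X i - Y j \<subseteq> (\<Union>j'\<in>{..<l} - {j}. Y j' \<inter> X i)" using part_subset_V[OF i(1)] YV by blast
    then have "card (X i - Y j) \<le> card (\<Union>j'\<in>{..<l} - {j}. Y j' \<inter> X i)"
      using finite_part[OF i(1)] by (intro card_mono) auto
    also have "\<dots> \<le> (\<Sum>j'\<in>{..<l} - {j}. card (Y j' \<inter> X i))" by (rule card_UN_le) simp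
    also have "\<dots> \<le> (\<Sum>j'\<in>{..<l} - {j}. a)"
      using small i by (intro sum_mono) (auto intro: less_imp_le)
    also have "\<dots> \<le> l * a" using card_Diff1_le[of "{..<l}" j] by simp
    finally have "card (X i - Y j \<inter> X i) \<le> l * a" by (simp add: Diff_Int)
    moreover have "v \<in> V - X i" using part_subset_V[OF k] v part_unique k i(1) False by blast
    ultimately have "induced (extension E) (Y j) \<notin> T"
      by (intro near[unfolded near_part_forbidden_def, rule_format, of i v "Y j \<inter> X i" "Y j"])
        (use i(1) j(2) in auto)
    then show ?thesis using YT j(1) by blast
  qed
qed

lemma unique_Tl_partition_if_forbidden:
  assumes E: "E \<subseteq> cross_pairs" and big: "\<forall>k<l. l * a \<le> card (X k)"
    and two: "two_parts_forbidden a E" and near: "near_part_forbidden a E"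
  shows "unique_Tl_partition T l (extension E) X"
  unfolding unique_Tl_partition_def
proof (intro conjI allI impI)
  show "Tl_partition T l (extension E) X" using parts_Tl_partition[OF E] .
  fix Y assume Y: "Tl_partition T l (extension E) Y"
  obtain \<sigma> where inj: "inj_on \<sigma> {..<l}" and surj: "\<sigma> ` {..<l} = {..<l}"
    and small: "\<And>i j. i < l \<Longrightarrow> j < l \<Longrightarrow> j \<noteq> \<sigma> i \<Longrightarrow> card (Y j \<inter> X i) < a"
    using Tl_partition_matching[OF two big Y] by blast
  have \<sigma>l: "\<sigma> k < l" if "k < l" for k using surj that by auto
  have sub: "X k \<subseteq> Y (\<sigma> k)" if "k < l" for k
    using part_subset_matched_class[OF near Y surj small that] .
  have "Y (\<sigma> k) = X k" if k: "k < l" for k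
  proof
    show "Y (\<sigma> k) \<subseteq> X k"
    proof
      fix w assume w: "w \<in> Y (\<sigma> k)"
      then have "w \<in> V" using Y \<sigma>l[OF k] unfolding Tl_partition_def by auto
      then obtain k' where k': "k' < l" "w \<in> X k'" using part_of_vertex by blast
      then have "w \<in> Y (\<sigma> k')" using sub by blast
      then have "\<sigma> k = \<sigma> k'" using Y w \<sigma>l k k'(1) unfolding Tl_partition_def by blast
      then have "k = k'" using inj k k'(1) by (auto dest: inj_onD)
      then show "w \<in> X k" using k' by simp
    qed
  qed (rule sub[OF k])
  then have "Y ` \<sigma> ` {..<l} = X ` {..<l}" by (auto simp: image_image)
  then show "Y ` {..<l} = X ` {..<l}" using surj by simp
qed

end

section \<open>Random extensions\<close>

definition homogeneity :: "graph \<Rightarrow> nat set \<Rightarrow> bool" where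
  "homogeneity H D = (SOME \<tau>. homogeneous H \<tau> D)"

lemma homogeneous_homogeneity: "homogeneous H \<tau> D \<Longrightarrow> homogeneous H (homogeneity H D) D"
  unfolding homogeneity_def by (rule someI)

lemma card_UN_le_mult:
  assumes "finite I" "\<And>x. x \<in> I \<Longrightarrow> real (card (f x)) \<le> b"
  shows "real (card (\<Union>x\<in>I. f x)) \<le> real (card I) * b"
proof -
  have "real (card (\<Union>x\<in>I. f x)) \<le> (\<Sum>x\<in>I. real (card (f x)))"
    using card_UN_le[OF assms(1), of f] by (simp flip: of_nat_sum)
  also have "\<dots> \<le> real (card I) * b" using assms(2) by (rule sum_bounded_above)
  finally show ?thesis .
qed

(* Union bound over at most l^2 4^n pairs of large sets in two parts, each escaping with
   probability (1 - 2^(-r^2))^((a-R) div r)^2, and over at most l n (l a + 1) triples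
   (part, outside vertex, group), each escaping with probability (1 - 2^(-r^2))^g. *)
definition failure_bound :: "nat \<Rightarrow> nat \<Rightarrow> nat \<Rightarrow> nat \<Rightarrow> nat \<Rightarrow> nat \<Rightarrow> real" where
  "failure_bound l n r R a g =
     real l ^ 2 * 4 ^ n * (1 - 1 / 2 ^ (r * r)) ^ (((a - R) div r) ^ 2)
     + real l * real n * (real l * real a + 1) * (1 - 1 / 2 ^ (r * r)) ^ g"

(* a is the size threshold of the two-part configuration and g the number of blocks per group. *)
locale random_extension = extension_setting +
  fixes a r R g :: nat
    and pairF :: "bool \<Rightarrow> bool \<Rightarrow> graph" and pairU1 pairU2 :: "bool \<Rightarrow> bool \<Rightarrow> nat set"
    and starF :: "bool \<Rightarrow> graph" and starc :: "bool \<Rightarrow> nat" and starU :: "bool \<Rightarrow> nat set"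
  assumes big: "\<forall>k<l. l * a \<le> card (X k)"
    and r: "r \<ge> 1"
    and ramsey: "\<forall>H S. finite S \<longrightarrow> R \<le> card S \<longrightarrow> (\<exists>D\<subseteq>S. card D = r \<and> (\<exists>\<tau>. homogeneous H \<tau> D))"
    and pair_split: "\<forall>\<tau>1 \<tau>2. forbidden_split T (pairF \<tau>1 \<tau>2) (pairU1 \<tau>1 \<tau>2) (pairU2 \<tau>1 \<tau>2) \<tau>1 \<tau>2 \<and>
       card (pairU1 \<tau>1 \<tau>2) \<le> r \<and> card (pairU2 \<tau>1 \<tau>2) \<le> r"
    and star_split: "\<forall>\<tau>. forbidden_split T (starF \<tau>) {starc \<tau>} (starU \<tau>) False \<tau> \<and> card (starU \<tau>) \<le> r"
    and g: "g \<ge> 1"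
    and enough_blocks: "\<forall>i<l. (l * a + 1) * g \<le> (card (X i) - R) div r"
begin

definition blocks :: "graph \<Rightarrow> nat set \<Rightarrow> nat set set" where
  "blocks H S = (SOME Bs. (\<forall>D\<in>Bs. D \<subseteq> S \<and> card D = r \<and> (\<exists>\<tau>. homogeneous H \<tau> D)) \<and> disjoint Bs \<and>
     card S < r * card Bs + R \<and> finite Bs)"

lemma blocks_spec:
  assumes "finite S"
  shows "\<forall>D\<in>blocks H S. D \<subseteq> S \<and> card D = r \<and> (\<exists>\<tau>. homogeneous H \<tau> D)"
    "disjoint (blocks H S)" "card S < r * card (blocks H S) + R" "finite (blocks H S)"
proof -
  have "\<forall>S. finite S \<longrightarrow> R \<le> card S \<longrightarrow> (\<exists>D\<subseteq>S. card D = r \<and> (\<exists>\<tau>. homogeneous H \<tau> D))"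
    using ramsey by blast
  from someI_ex[OF disjoint_homogeneous_blocks[OF this r assms]]
  show "\<forall>D\<in>blocks H S. D \<subseteq> S \<and> card D = r \<and> (\<exists>\<tau>. homogeneous H \<tau> D)"
    "disjoint (blocks H S)" "card S < r * card (blocks H S) + R" "finite (blocks H S)"
    unfolding blocks_def by blast+
qed

lemma blocksD:
  assumes "finite S" "D \<in> blocks H S"
  shows "D \<subseteq> S" "card D = r" "homogeneous H (homogeneity H D) D" "finite D"
proof -
  have D: "D \<subseteq> S \<and> card D = r \<and> (\<exists>\<tau>. homogeneous H \<tau> D)" using blocks_spec(1)[OF assms(1)] assms(2) by blast
  then show "D \<subseteq> S" "card D = r" "homogeneous H (homogeneity H D) D"
    using homogeneous_homogeneity by blast+
  show "finite D" using D r card.infinite by fastforce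
qed

lemma card_blocks:
  assumes "finite S"
  shows "(card S - R) div r \<le> card (blocks H S)"
proof -
  have "card S - R \<le> r * card (blocks H S)" using blocks_spec(3)[OF assms, of H] by linarith
  then have "(card S - R) div r \<le> (r * card (blocks H S)) div r" by (rule div_le_mono)
  then show ?thesis using r by simp
qed

(* Planting pairF into blocks C and D, through fixed injections, prescribes the adjacency of
   the cross pairs in pair_slots; pair_target lists those that must be edges. *)
definition pair_slots :: "nat \<Rightarrow> nat \<Rightarrow> nat set \<times> nat set \<Rightarrow> nat set set" where
  "pair_slots k i = (\<lambda>(C, D). let \<tau>1 = homogeneity (Gs k) C; \<tau>2 = homogeneity (Gs i) D
     in split_slots (pairU1 \<tau>1 \<tau>2) (pairU2 \<tau>1 \<tau>2) C D)"

definition pair_target :: "nat \<Rightarrow> nat \<Rightarrow> nat set \<times> nat set \<Rightarrow> nat set set" where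
  "pair_target k i = (\<lambda>(C, D). let \<tau>1 = homogeneity (Gs k) C; \<tau>2 = homogeneity (Gs i) D
     in split_target (pairF \<tau>1 \<tau>2) (pairU1 \<tau>1 \<tau>2) (pairU2 \<tau>1 \<tau>2) C D)"

definition star_slots :: "nat \<Rightarrow> nat \<Rightarrow> nat set \<Rightarrow> nat set set" where
  "star_slots i v D = (let \<tau> = homogeneity (Gs i) D in split_slots {starc \<tau>} (starU \<tau>) {v} D)"

definition star_target :: "nat \<Rightarrow> nat \<Rightarrow> nat set \<Rightarrow> nat set set" where
  "star_target i v D = (let \<tau> = homogeneity (Gs i) D in split_target (starF \<tau>) {starc \<tau>} (starU \<tau>) {v} D)"

definition pair_failures :: "nat \<Rightarrow> nat \<Rightarrow> nat set \<Rightarrow> nat set \<Rightarrow> nat set set set" where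
  "pair_failures k i A B =
     pattern_avoiders cross_pairs (blocks (Gs k) A \<times> blocks (Gs i) B) (pair_slots k i) (pair_target k i)"

definition star_failures :: "nat \<Rightarrow> nat \<Rightarrow> nat set set \<Rightarrow> nat set set set" where
  "star_failures i v Q = pattern_avoiders cross_pairs Q (star_slots i v) (star_target i v)"

lemma pair_slots_spec:
  assumes ki: "k < l" "i < l" "k \<noteq> i" and AB: "A \<subseteq> X k" "B \<subseteq> X i"
    and C: "C \<in> blocks (Gs k) A" and D: "D \<in> blocks (Gs i) B"
  shows "pair_slots k i (C, D) \<subseteq> cross C D" "pair_target k i (C, D) \<subseteq> pair_slots k i (C, D)"
    "card (pair_slots k i (C, D)) \<le> r * r"
    "\<And>E Y. E \<subseteq> cross_pairs \<Longrightarrow> E \<inter> pair_slots k i (C, D) = pair_target k i (C, D) \<Longrightarrow>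
       C \<union> D \<subseteq> Y \<Longrightarrow> induced (extension E) Y \<notin> T"
proof -
  have "finite A" "finite B"
    using finite_subset[OF AB(1) finite_part[OF ki(1)]] finite_subset[OF AB(2) finite_part[OF ki(2)]] .
  note bC = blocksD[OF \<open>finite A\<close> C] and bD = blocksD[OF \<open>finite B\<close> D]
  define \<tau>1 \<tau>2 where "\<tau>1 = homogeneity (Gs k) C" and "\<tau>2 = homogeneity (Gs i) D"
  have F: "forbidden_split T (pairF \<tau>1 \<tau>2) (pairU1 \<tau>1 \<tau>2) (pairU2 \<tau>1 \<tau>2) \<tau>1 \<tau>2"
    and U: "card (pairU1 \<tau>1 \<tau>2) \<le> card C" "card (pairU2 \<tau>1 \<tau>2) \<le> card D"
    using pair_split bC(2) bD(2) by auto
  have fin: "finite (pairU1 \<tau>1 \<tau>2)" "finite (pairU2 \<tau>1 \<tau>2)" using forbidden_split_finite[OF F] by auto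
  show "pair_slots k i (C, D) \<subseteq> cross C D"
    using split_slots_subset_cross[OF fin bC(4) bD(4) U] unfolding pair_slots_def \<tau>1_def \<tau>2_def by (simp add: Let_def)
  show "pair_target k i (C, D) \<subseteq> pair_slots k i (C, D)"
    unfolding pair_slots_def pair_target_def by (simp add: Let_def split_target_subset)
  have "card (pair_slots k i (C, D)) \<le> card (pairU1 \<tau>1 \<tau>2) * card (pairU2 \<tau>1 \<tau>2)"
    using card_split_slots[OF fin] unfolding pair_slots_def \<tau>1_def \<tau>2_def by (simp add: Let_def)
  also have "\<dots> \<le> r * r" using pair_split by (intro mult_le_mono) auto
  finally show "card (pair_slots k i (C, D)) \<le> r * r" .
  fix E Y assume "E \<subseteq> cross_pairs" "E \<inter> pair_slots k i (C, D) = pair_target k i (C, D)" "C \<union> D \<subseteq> Y"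
  then show "induced (extension E) Y \<notin> T"
    using extension_induced_notin_split[OF _ ki _ _ bC(3) bD(3) F[unfolded \<tau>1_def \<tau>2_def] U[unfolded \<tau>1_def \<tau>2_def]]
      bC(1) bD(1) AB unfolding pair_slots_def pair_target_def \<tau>1_def \<tau>2_def by (simp add: Let_def)
qed

lemma star_slots_spec:
  assumes i: "i < l" and v: "v \<in> V - X i" and D: "D \<in> blocks (Gs i) (X i)"
  shows "star_slots i v D \<subseteq> cross {v} D" "star_target i v D \<subseteq> star_slots i v D"
    "card (star_slots i v D) \<le> r * r"
    "\<And>E Y. E \<subseteq> cross_pairs \<Longrightarrow> E \<inter> star_slots i v D = star_target i v D \<Longrightarrow>
       insert v D \<subseteq> Y \<Longrightarrow> induced (extension E) Y \<notin> T"
proof -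
  obtain k where k: "k < l" "k \<noteq> i" "v \<in> X k" using part_of_vertex v by blast
  note bD = blocksD[OF finite_part[OF i] D]
  define \<tau> where "\<tau> = homogeneity (Gs i) D"
  have F: "forbidden_split T (starF \<tau>) {starc \<tau>} (starU \<tau>) False \<tau>"
    and U: "card {starc \<tau>} \<le> card {v}" "card (starU \<tau>) \<le> card D"
    using star_split bD(2) by auto
  have fin: "finite {starc \<tau>}" "finite (starU \<tau>)" using forbidden_split_finite[OF F] by auto
  show "star_slots i v D \<subseteq> cross {v} D"
    using split_slots_subset_cross[OF fin _ bD(4) U] unfolding star_slots_def \<tau>_def by (simp add: Let_def)
  show "star_target i v D \<subseteq> star_slots i v D"
    unfolding star_slots_def star_target_def by (simp add: Let_def split_target_subset)
  have "card (star_slots i v D) \<le> card {starc \<tau>} * card (starU \<tau>)"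
    using card_split_slots[OF fin] unfolding star_slots_def \<tau>_def by (simp add: Let_def)
  also have "\<dots> \<le> r * r" using star_split r by (intro mult_le_mono) auto
  finally show "card (star_slots i v D) \<le> r * r" .
  fix E Y assume "E \<subseteq> cross_pairs" "E \<inter> star_slots i v D = star_target i v D" "insert v D \<subseteq> Y"
  then show "induced (extension E) Y \<notin> T"
    using extension_induced_notin_split[OF _ k(1) i k(2) _ bD(1) homogeneous_singleton bD(3)
        F[unfolded \<tau>_def] U[unfolded \<tau>_def]] k(3)
    unfolding star_slots_def star_target_def \<tau>_def by (simp add: Let_def)
qed

definition groups :: "nat \<Rightarrow> nat set set set" where
  "groups i = (SOME Q. Q \<subseteq> Pow (blocks (Gs i) (X i)) \<and> card Q = l * a + 1 \<and> (\<forall>x\<in>Q. card x = g) \<and> disjoint Q)"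

lemma groups_spec:
  assumes "i < l"
  shows "groups i \<subseteq> Pow (blocks (Gs i) (X i))" "card (groups i) = l * a + 1"
    "\<forall>x\<in>groups i. card x = g" "disjoint (groups i)"
proof -
  have "(l * a + 1) * g \<le> card (blocks (Gs i) (X i))"
    using enough_blocks assms card_blocks[OF finite_part[OF assms]] le_trans by blast
  from someI_ex[OF disjoint_subsets_of_card[OF blocks_spec(4)[OF finite_part[OF assms]] g this]]
  show "groups i \<subseteq> Pow (blocks (Gs i) (X i))" "card (groups i) = l * a + 1"
    "\<forall>x\<in>groups i. card x = g" "disjoint (groups i)"
    unfolding groups_def by blast+
qed

lemma pair_slots_disjoint:
  assumes ki: "k < l" "i < l" "k \<noteq> i" and AB: "A \<subseteq> X k" "B \<subseteq> X i"
  shows "disjoint_family_on (pair_slots k i) (blocks (Gs k) A \<times> blocks (Gs i) B)"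
  unfolding disjoint_family_on_def
proof (intro ballI impI)
  have fin: "finite A" "finite B"
    using finite_subset[OF AB(1) finite_part[OF ki(1)]] finite_subset[OF AB(2) finite_part[OF ki(2)]] .
  fix s t assume "s \<in> blocks (Gs k) A \<times> blocks (Gs i) B" "t \<in> blocks (Gs k) A \<times> blocks (Gs i) B" "s \<noteq> t"
  then obtain C D C' D' where CD: "s = (C, D)" "C \<in> blocks (Gs k) A" "D \<in> blocks (Gs i) B"
    and CD': "t = (C', D')" "C' \<in> blocks (Gs k) A" "D' \<in> blocks (Gs i) B" by blast
  have "C \<noteq> C' \<or> D \<noteq> D'" using \<open>s \<noteq> t\<close> CD(1) CD'(1) by auto
  then have "C \<inter> C' = {} \<or> D \<inter> D' = {}"
    using disjointD[OF blocks_spec(2)[OF fin(1)] CD(2) CD'(2)] disjointD[OF blocks_spec(2)[OF fin(2)] CD(3) CD'(3)]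
    by blast
  moreover have "(C \<union> C') \<inter> (D \<union> D') = {}"
    using blocksD(1)[OF fin(1)] blocksD(1)[OF fin(2)] CD CD' AB parts_disjoint ki by blast
  ultimately have "cross C D \<inter> cross C' D' = {}" by (rule cross_disjoint)
  then show "pair_slots k i s \<inter> pair_slots k i t = {}"
    using pair_slots_spec(1)[OF ki AB CD(2,3)] pair_slots_spec(1)[OF ki AB CD'(2,3)] CD(1) CD'(1) by blast
qed

lemma star_slots_disjoint:
  assumes i: "i < l" and v: "v \<in> V - X i" and Q: "Q \<subseteq> blocks (Gs i) (X i)"
  shows "disjoint_family_on (star_slots i v) Q"
  unfolding disjoint_family_on_def
proof (intro ballI impI)
  fix D D' assume "D \<in> Q" "D' \<in> Q" "D \<noteq> D'"
  then have D: "D \<in> blocks (Gs i) (X i)" "D' \<in> blocks (Gs i) (X i)" using Q by blast+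
  have "{v} \<inter> {v} = {} \<or> D \<inter> D' = {}"
    using disjointD[OF blocks_spec(2)[OF finite_part[OF i]] D \<open>D \<noteq> D'\<close>] by blast
  moreover have "({v} \<union> {v}) \<inter> (D \<union> D') = {}"
    using blocksD(1)[OF finite_part[OF i] D(1)] blocksD(1)[OF finite_part[OF i] D(2)] v by blast
  ultimately have "cross {v} D \<inter> cross {v} D' = {}" by (rule cross_disjoint)
  then show "star_slots i v D \<inter> star_slots i v D' = {}"
    using star_slots_spec(1)[OF i v D(1)] star_slots_spec(1)[OF i v D(2)] by blast
qed

lemma card_pair_failures:
  assumes ki: "k < l" "i < l" "k \<noteq> i" and AB: "A \<subseteq> X k" "B \<subseteq> X i"
    and c: "a \<le> card A" "a \<le> card B"
  shows "real (card (pair_failures k i A B))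
    \<le> (1 - 1 / 2 ^ (r * r)) ^ (((a - R) div r) ^ 2) * 2 ^ card cross_pairs"
proof -
  let ?I = "blocks (Gs k) A \<times> blocks (Gs i) B"
  have fin: "finite A" "finite B"
    using finite_subset[OF AB(1) finite_part[OF ki(1)]] finite_subset[OF AB(2) finite_part[OF ki(2)]] .
  have "finite ?I" using blocks_spec(4)[OF fin(1)] blocks_spec(4)[OF fin(2)] by simp
  have slots: "\<forall>s\<in>?I. pair_slots k i s \<subseteq> cross_pairs \<and> pair_target k i s \<subseteq> pair_slots k i s \<and>
      card (pair_slots k i s) \<le> r * r"
  proof
    fix s assume "s \<in> ?I"
    then obtain C D where CD: "s = (C, D)" "C \<in> blocks (Gs k) A" "D \<in> blocks (Gs i) B" by blast
    have "cross C D \<subseteq> cross_pairs"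
      using cross_subset_cross_pairs[OF ki] blocksD(1)[OF fin(1) CD(2)] blocksD(1)[OF fin(2) CD(3)] AB by blast
    then show "pair_slots k i s \<subseteq> cross_pairs \<and> pair_target k i s \<subseteq> pair_slots k i s \<and>
        card (pair_slots k i s) \<le> r * r"
      using pair_slots_spec(1-3)[OF ki AB CD(2,3)] CD(1) by blast
  qed
  have "real (card (pair_failures k i A B)) \<le> (1 - 1 / 2 ^ (r * r)) ^ card ?I * 2 ^ card cross_pairs"
    unfolding pair_failures_def
    by (rule card_pattern_avoiders[OF finite_cross_pairs \<open>finite ?I\<close> slots pair_slots_disjoint[OF ki AB]])
  also have "\<dots> \<le> (1 - 1 / 2 ^ (r * r)) ^ (((a - R) div r) ^ 2) * 2 ^ card cross_pairs"
  proof -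
    have "(a - R) div r \<le> card (blocks (Gs k) A)" "(a - R) div r \<le> card (blocks (Gs i) B)"
      using c card_blocks[OF fin(1)] card_blocks[OF fin(2)] div_le_mono diff_le_mono le_trans by metis+
    then have "((a - R) div r) ^ 2 \<le> card ?I"
      by (simp add: power2_eq_square card_cartesian_product mult_le_mono)
    moreover have "(0::real) \<le> 1 - 1 / 2 ^ (r * r)" "(1::real) - 1 / 2 ^ (r * r) \<le> 1" by simp_all
    ultimately show ?thesis by (intro mult_right_mono power_decreasing) auto
  qed
  finally show ?thesis .
qed

lemma card_star_failures:
  assumes i: "i < l" and v: "v \<in> V - X i" and Q: "Q \<in> groups i"
  shows "real (card (star_failures i v Q)) \<le> (1 - 1 / 2 ^ (r * r)) ^ g * 2 ^ card cross_pairs"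
proof -
  have blocksQ: "Q \<subseteq> blocks (Gs i) (X i)" using groups_spec(1)[OF i] Q by blast
  then have "finite Q" using blocks_spec(4)[OF finite_part[OF i]] finite_subset by blast
  obtain k where k: "k < l" "k \<noteq> i" "v \<in> X k" using part_of_vertex v by blast
  have "cross {v} D \<subseteq> cross_pairs" if "D \<in> Q" for D
    using cross_subset_cross_pairs[OF k(1) i k(2)] blocksD(1)[OF finite_part[OF i]] blocksQ that k(3) by blast
  then have slots: "\<forall>D\<in>Q. star_slots i v D \<subseteq> cross_pairs \<and> star_target i v D \<subseteq> star_slots i v D \<and>
      card (star_slots i v D) \<le> r * r"
    using star_slots_spec(1-3)[OF i v] blocksQ by blast
  have "real (card (star_failures i v Q)) \<le> (1 - 1 / 2 ^ (r * r)) ^ card Q * 2 ^ card cross_pairs"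
    unfolding star_failures_def
    by (rule card_pattern_avoiders[OF finite_cross_pairs \<open>finite Q\<close> slots star_slots_disjoint[OF i v blocksQ]])
  then show ?thesis using groups_spec(3)[OF i] Q by simp
qed

definition pair_events :: "(nat \<times> nat \<times> nat set \<times> nat set) set" where
  "pair_events = {(k, i, A, B). k < l \<and> i < l \<and> k \<noteq> i \<and> A \<subseteq> X k \<and> B \<subseteq> X i \<and> a \<le> card A \<and> a \<le> card B}"

definition star_events :: "(nat \<times> nat \<times> nat set set) set" where
  "star_events = (SIGMA i:{..<l}. (V - X i) \<times> groups i)"

lemma two_parts_forbidden_unless_pair_failure:
  assumes E: "E \<subseteq> cross_pairs" and none: "E \<notin> (\<Union>(k, i, A, B)\<in>pair_events. pair_failures k i A B)"
  shows "two_parts_forbidden a E"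
  unfolding two_parts_forbidden_def
proof (intro allI impI)
  fix k i A B Y
  assume ki: "k < l" "i < l" "k \<noteq> i" and AB: "A \<subseteq> X k" "B \<subseteq> X i" and c: "a \<le> card A" "a \<le> card B"
    and Y: "A \<union> B \<subseteq> Y"
  have "E \<notin> pair_failures k i A B" using none ki AB c unfolding pair_events_def by blast
  then obtain C D where CD: "C \<in> blocks (Gs k) A" "D \<in> blocks (Gs i) B"
    and match: "E \<inter> pair_slots k i (C, D) = pair_target k i (C, D)"
    using E unfolding pair_failures_def pattern_avoiders_def by blast
  have "finite A" "finite B"
    using finite_subset[OF AB(1) finite_part[OF ki(1)]] finite_subset[OF AB(2) finite_part[OF ki(2)]] .
  then have "C \<union> D \<subseteq> Y" using blocksD(1) CD Y by blast
  then show "induced (extension E) Y \<notin> T" using pair_slots_spec(4)[OF ki AB CD E match] by blast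
qed

lemma near_part_forbidden_unless_star_failure:
  assumes E: "E \<subseteq> cross_pairs" and none: "E \<notin> (\<Union>(i, v, Q)\<in>star_events. star_failures i v Q)"
  shows "near_part_forbidden a E"
  unfolding near_part_forbidden_def
proof (intro allI impI ballI)
  fix i v W Y
  assume i: "i < l" and v: "v \<in> V - X i" and W: "W \<subseteq> X i" "card (X i - W) \<le> l * a"
    and Y: "insert v W \<subseteq> Y"
  have "\<Union>(blocks (Gs i) (X i)) \<subseteq> X i" using blocksD(1)[OF finite_part[OF i]] by blast
  then obtain Q where Q: "Q \<in> groups i" "\<Union>Q \<subseteq> W"
    using group_inside_if_few_missing[OF blocks_spec(2)[OF finite_part[OF i]] _ groups_spec(1,4)[OF i]
        finite_part[OF i]] W(2) groups_spec(2)[OF i] by (metis less_Suc_eq_le add.commute plus_1_eq_Suc)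
  have "E \<notin> star_failures i v Q" using none i v Q(1) unfolding star_events_def by blast
  then obtain D where D: "D \<in> Q" "E \<inter> star_slots i v D = star_target i v D"
    using E unfolding star_failures_def pattern_avoiders_def by blast
  have "D \<in> blocks (Gs i) (X i)" using groups_spec(1)[OF i] Q(1) D(1) by blast
  moreover have "insert v D \<subseteq> Y" using Q(2) D(1) Y by blast
  ultimately show "induced (extension E) Y \<notin> T" using star_slots_spec(4)[OF i v _ E D(2)] by blast
qed

lemma card_pair_events: "finite pair_events" "card pair_events \<le> l ^ 2 * 4 ^ n"
proof -
  have sub: "pair_events \<subseteq> {..<l} \<times> {..<l} \<times> Pow V \<times> Pow V"
    unfolding pair_events_def using part_subset_V by auto
  then show "finite pair_events" using finite_subset finite_V by blast
  have "card pair_events \<le> card ({..<l} \<times> {..<l} \<times> Pow V \<times> Pow V)"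
    using sub finite_V by (intro card_mono) auto
  also have "\<dots> = l ^ 2 * 4 ^ n"
    using finite_V card_V by (simp add: card_cartesian_product card_Pow power2_eq_square
        flip: power_mult_distrib)
  finally show "card pair_events \<le> l ^ 2 * 4 ^ n" .
qed

lemma card_star_events: "finite star_events" "card star_events \<le> l * n * (l * a + 1)"
proof -
  have "finite (groups i)" if "i < l" for i using groups_spec(2)[OF that] by (intro card_ge_0_finite) simp
  then have fin: "\<forall>i\<in>{..<l}. finite ((V - X i) \<times> groups i)" using finite_V by blast
  then show "finite star_events" unfolding star_events_def by auto
  have "card star_events = (\<Sum>i<l. card ((V - X i) \<times> groups i))"
    unfolding star_events_def using fin by (simp add: card_SigmaI)
  also have "\<dots> \<le> (\<Sum>i<l. n * (l * a + 1))"
  proof (rule sum_mono)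
    fix i assume i: "i \<in> {..<l}"
    have "card (V - X i) \<le> n" using card_mono[OF finite_V, of "V - X i"] card_V by auto
    moreover have "card ((V - X i) \<times> groups i) = card (V - X i) * (l * a + 1)"
      using groups_spec(2) i by (simp add: card_cartesian_product)
    ultimately show "card ((V - X i) \<times> groups i) \<le> n * (l * a + 1)" by (simp only: mult_le_mono1)
  qed
  also have "\<dots> = l * n * (l * a + 1)" by (simp add: algebra_simps)
  finally show "card star_events \<le> l * n * (l * a + 1)" .
qed

lemma non_unique_subset_failures:
  "{E \<in> Pow cross_pairs. \<not> unique_Tl_partition T l (extension E) X}
     \<subseteq> (\<Union>(k, i, A, B)\<in>pair_events. pair_failures k i A B) \<union> (\<Union>(i, v, Q)\<in>star_events. star_failures i v Q)"
  using unique_Tl_partition_if_forbidden[OF _ big] two_parts_forbidden_unless_pair_failure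
    near_part_forbidden_unless_star_failure by blast

lemma card_Union_pair_failures:
  "real (card (\<Union>(k, i, A, B)\<in>pair_events. pair_failures k i A B))
     \<le> real l ^ 2 * 4 ^ n * ((1 - 1 / 2 ^ (r * r)) ^ (((a - R) div r) ^ 2) * 2 ^ card cross_pairs)"
proof -
  have "real (card (\<Union>(k, i, A, B)\<in>pair_events. pair_failures k i A B))
      \<le> real (card pair_events) * ((1 - 1 / 2 ^ (r * r)) ^ (((a - R) div r) ^ 2) * 2 ^ card cross_pairs)"
  proof (rule card_UN_le_mult[OF card_pair_events(1)])
    fix x assume "x \<in> pair_events"
    then obtain k i A B where "x = (k, i, A, B)" "k < l" "i < l" "k \<noteq> i" "A \<subseteq> X k" "B \<subseteq> X i"
      "a \<le> card A" "a \<le> card B" unfolding pair_events_def by blast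
    then show "real (card (case x of (k, i, A, B) \<Rightarrow> pair_failures k i A B))
        \<le> (1 - 1 / 2 ^ (r * r)) ^ (((a - R) div r) ^ 2) * 2 ^ card cross_pairs"
      using card_pair_failures by simp
  qed
  also have "\<dots> \<le> real l ^ 2 * 4 ^ n * ((1 - 1 / 2 ^ (r * r)) ^ (((a - R) div r) ^ 2) * 2 ^ card cross_pairs)"
    using of_nat_mono[OF card_pair_events(2), where 'a = real] by (intro mult_right_mono) simp_all
  finally show ?thesis .
qed

lemma card_Union_star_failures:
  "real (card (\<Union>(i, v, Q)\<in>star_events. star_failures i v Q))
     \<le> real l * real n * (real l * real a + 1) * ((1 - 1 / 2 ^ (r * r)) ^ g * 2 ^ card cross_pairs)"
proof -
  have "real (card (\<Union>(i, v, Q)\<in>star_events. star_failures i v Q))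
      \<le> real (card star_events) * ((1 - 1 / 2 ^ (r * r)) ^ g * 2 ^ card cross_pairs)"
  proof (rule card_UN_le_mult[OF card_star_events(1)])
    fix x assume "x \<in> star_events"
    then obtain i v Q where "x = (i, v, Q)" "i < l" "v \<in> V - X i" "Q \<in> groups i"
      unfolding star_events_def by blast
    then show "real (card (case x of (i, v, Q) \<Rightarrow> star_failures i v Q))
        \<le> (1 - 1 / 2 ^ (r * r)) ^ g * 2 ^ card cross_pairs"
      using card_star_failures by simp
  qed
  also have "\<dots> \<le> real l * real n * (real l * real a + 1) * ((1 - 1 / 2 ^ (r * r)) ^ g * 2 ^ card cross_pairs)"
    using of_nat_mono[OF card_star_events(2), where 'a = real]
    by (intro mult_right_mono) (simp_all add: distrib_left)
  finally show ?thesis .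
qed

lemma card_non_unique:
  "real (card {E \<in> Pow cross_pairs. \<not> unique_Tl_partition T l (extension E) X})
     \<le> failure_bound l n r R a g * 2 ^ card cross_pairs"
proof -
  let ?pair = "\<Union>(k, i, A, B)\<in>pair_events. pair_failures k i A B"
  let ?star = "\<Union>(i, v, Q)\<in>star_events. star_failures i v Q"
  have "finite ?pair" "finite ?star"
    using card_pair_events(1) card_star_events(1) finite_cross_pairs
    unfolding pair_failures_def star_failures_def pattern_avoiders_def by auto
  then have "card {E \<in> Pow cross_pairs. \<not> unique_Tl_partition T l (extension E) X} \<le> card ?pair + card ?star"
    using non_unique_subset_failures by (meson card_Un_le card_mono finite_UnI le_trans)
  then have "real (card {E \<in> Pow cross_pairs. \<not> unique_Tl_partition T l (extension E) X})
      \<le> real (card ?pair) + real (card ?star)"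
    by (simp flip: of_nat_add)
  also have "\<dots> \<le> failure_bound l n r R a g * 2 ^ card cross_pairs"
    using card_Union_pair_failures card_Union_star_failures unfolding failure_bound_def
    by (simp add: algebra_simps)
  finally show ?thesis .
qed

lemma card_unique_extensions:
  "real (card {G \<in> extensions l Gs. unique_Tl_partition T l G X})
     \<ge> (1 - failure_bound l n r R a g) * real (card (extensions l Gs))"
proof -
  let ?U = "{E \<in> Pow cross_pairs. unique_Tl_partition T l (extension E) X}"
  let ?N = "{E \<in> Pow cross_pairs. \<not> unique_Tl_partition T l (extension E) X}"
  have "card (?U \<union> ?N) = card ?U + card ?N"
    using finite_cross_pairs by (intro card_Un_disjoint) auto
  moreover have "?U \<union> ?N = Pow cross_pairs" by auto
  ultimately have "card ?U + card ?N = 2 ^ card cross_pairs"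
    using finite_cross_pairs by (simp add: card_Pow)
  then have "real (card ?U) + real (card ?N) = 2 ^ card cross_pairs"
    by (simp flip: of_nat_add)
  then have "real (card ?U) \<ge> (1 - failure_bound l n r R a g) * 2 ^ card cross_pairs"
    using card_non_unique by (simp add: algebra_simps)
  then show ?thesis using card_extensions_such_that card_extensions by simp
qed

end

section \<open>Choice of the parameters\<close>

lemma real_div_ge: "0 < m \<Longrightarrow> real q / real m - 1 \<le> real (q div m)"
proof -
  assume m: "0 < m"
  have "q < q div m * m + m" using m by (metis add_less_cancel_left div_mult_mod_eq mod_less_divisor)
  then have "real q < real (q div m) * real m + real m" by (metis of_nat_add of_nat_less_iff of_nat_mult)
  then show ?thesis using m by (simp add: field_simps)
qed

lemma real_diff_div_ge:
  assumes "0 < r" "x \<le> real q"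
  shows "(x - real R) / real r - 1 \<le> real ((q - R) div r)"
proof -
  have "(x - real R) / real r \<le> real (q - R) / real r"
    using assms by (intro divide_right_mono) auto
  then show ?thesis using real_div_ge[OF assms(1), of "q - R"] by linarith
qed

lemma power_le_exp_ln:
  assumes "0 < \<rho>" "\<rho> < 1" "y \<le> real k"
  shows "\<rho> ^ k \<le> exp (- (- ln \<rho>) * y)"
proof -
  have "real k * ln \<rho> \<le> y * ln \<rho>" using assms by (simp add: mult_right_mono_neg)
  moreover have "\<rho> ^ k = exp (real k * ln \<rho>)" using assms(1) by (simp add: exp_of_nat_mult)
  ultimately show ?thesis by (simp add: mult.commute)
qed

(* With a = threshold n, the exponent ((a - R) div r)^2 grows faster than n while l a stays
   below the part size n div (2 l). *)
definition threshold :: "nat \<Rightarrow> nat" where "threshold n = nat \<lceil>real n powr (2/3)\<rceil>"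

definition group_size :: "nat \<Rightarrow> nat \<Rightarrow> nat \<Rightarrow> nat \<Rightarrow> nat" where
  "group_size l r R n = ((n div (2 * l) - R) div r) div (l * threshold n + 1)"

lemma threshold_bounds:
  "real n powr (2/3) \<le> real (threshold n)" "real (threshold n) \<le> real n powr (2/3) + 1"
proof -
  have "real (threshold n) = of_int \<lceil>real n powr (2/3)\<rceil>" unfolding threshold_def by simp
  then show "real n powr (2/3) \<le> real (threshold n)" "real (threshold n) \<le> real n powr (2/3) + 1"
    by (simp_all add: le_of_int_ceiling of_int_ceiling_le_add_one)
qed

lemma half_part_ge: "0 < l \<Longrightarrow> real n / (2 * real l) - 1 \<le> real (n div (2 * l))"
  using real_div_ge[of "2 * l" n] by simp

definition group_count_ub :: "real \<Rightarrow> real \<Rightarrow> real" where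
  "group_count_ub L x = L * (x powr (2/3) + 1) + 1"

definition part_blocks_lb :: "real \<Rightarrow> real \<Rightarrow> real \<Rightarrow> real \<Rightarrow> real" where
  "part_blocks_lb L r R x = (x / (2 * L) - 1 - R) / r - 1"

definition set_blocks_lb :: "real \<Rightarrow> real \<Rightarrow> real \<Rightarrow> real" where
  "set_blocks_lb r R x = (x powr (2/3) - R) / r - 1"

lemma group_count_le_ub: "real (l * threshold n + 1) \<le> group_count_ub (real l) (real n)"
  unfolding group_count_ub_def using threshold_bounds(2)[of n] by (simp add: mult_left_mono)

lemma set_blocks_ge_lb: "0 < r \<Longrightarrow> set_blocks_lb (real r) (real R) (real n) \<le> real ((threshold n - R) div r)"
  unfolding set_blocks_lb_def using real_diff_div_ge threshold_bounds(1) by blast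

lemma group_size_ge:
  assumes l: "0 < l" and r: "0 < r" and nonneg: "0 \<le> part_blocks_lb (real l) (real r) (real R) (real n)"
  shows "part_blocks_lb (real l) (real r) (real R) (real n) / group_count_ub (real l) (real n) - 1
    \<le> real (group_size l r R n)"
proof -
  define q where "q = (n div (2 * l) - R) div r"
  have "part_blocks_lb (real l) (real r) (real R) (real n) \<le> real q"
    unfolding part_blocks_lb_def q_def using real_diff_div_ge[OF r half_part_ge[OF l]] by (simp add: diff_diff_eq)
  moreover have "0 < real (l * threshold n + 1)" by (simp only: of_nat_0_less_iff)
  ultimately have "part_blocks_lb (real l) (real r) (real R) (real n) / group_count_ub (real l) (real n)
      \<le> real q / real (l * threshold n + 1)"
    using nonneg group_count_le_ub by (intro frac_le) auto
  then show ?thesis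
    using real_div_ge[of "l * threshold n + 1" q] unfolding group_size_def q_def by simp
qed

lemma failure_bound_le_exp:
  assumes r: "1 \<le> r" and h: "0 \<le> h" "h \<le> real ((a - R) div r)" and y: "y \<le> real g"
  defines "c \<equiv> - ln (1 - 1 / 2 ^ (r * r) :: real)"
  shows "failure_bound l n r R a g
    \<le> real l ^ 2 * exp (real n * ln 4 - c * h ^ 2) + real l * real n * (real l * real a + 1) * exp (- c * y)"
proof -
  let ?\<rho> = "1 - 1 / 2 ^ (r * r) :: real"
  have "(1::real) < 2 ^ (r * r)" using r by (simp add: one_less_power)
  then have \<rho>: "0 < ?\<rho>" "?\<rho> < 1" by (simp_all add: field_simps)
  have "h ^ 2 \<le> real (((a - R) div r) ^ 2)" using h by (simp add: power_mono)
  then have "?\<rho> ^ (((a - R) div r) ^ 2) \<le> exp (- c * h ^ 2)"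
    unfolding c_def by (rule power_le_exp_ln[OF \<rho>])
  moreover have "(4::real) ^ n = exp (real n * ln 4)" by (simp add: exp_of_nat_mult)
  ultimately have "(4::real) ^ n * ?\<rho> ^ (((a - R) div r) ^ 2) \<le> exp (real n * ln 4) * exp (- c * h ^ 2)"
    by simp
  also have "\<dots> = exp (real n * ln 4 - c * h ^ 2)" by (simp add: exp_diff exp_minus field_simps)
  finally have "real l ^ 2 * 4 ^ n * ?\<rho> ^ (((a - R) div r) ^ 2) \<le> real l ^ 2 * exp (real n * ln 4 - c * h ^ 2)"
    by (simp add: mult.assoc mult_left_mono)
  moreover have "?\<rho> ^ g \<le> exp (- c * y)" using power_le_exp_ln[OF \<rho> y] unfolding c_def .
  then have "real l * real n * (real l * real a + 1) * ?\<rho> ^ g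
      \<le> real l * real n * (real l * real a + 1) * exp (- c * y)"
    by (intro mult_left_mono) auto
  ultimately show ?thesis unfolding failure_bound_def by linarith
qed

lemma eventually_real_parameters:
  fixes L r R c \<epsilon> \<eta> :: real
  assumes "0 < L" "0 < r" "0 < c" "0 < \<epsilon>" "0 < \<eta>"
  shows "\<forall>\<^sub>F x in at_top. x powr (1 - \<epsilon>) \<le> x / (2 * L) \<and> group_count_ub L x \<le> x / (2 * L) \<and>
    1 \<le> part_blocks_lb L r R x / group_count_ub L x - 1 \<and> 0 \<le> set_blocks_lb r R x \<and>
    L ^ 2 * exp (x * ln 4 - c * set_blocks_lb r R x ^ 2)
      + L * x * group_count_ub L x * exp (- c * (part_blocks_lb L r R x / group_count_ub L x - 1)) < \<eta>"
proof -
  have "((\<lambda>x. L ^ 2 * exp (x * ln 4 - c * set_blocks_lb r R x ^ 2)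
      + L * x * group_count_ub L x * exp (- c * (part_blocks_lb L r R x / group_count_ub L x - 1))) \<longlongrightarrow> 0)
      at_top"
    unfolding group_count_ub_def part_blocks_lb_def set_blocks_lb_def using assms(1-3) by real_asymp
  from order_tendstoD(2)[OF this assms(5)]
  have "\<forall>\<^sub>F x in at_top. L ^ 2 * exp (x * ln 4 - c * set_blocks_lb r R x ^ 2)
      + L * x * group_count_ub L x * exp (- c * (part_blocks_lb L r R x / group_count_ub L x - 1)) < \<eta>" .
  moreover have "\<forall>\<^sub>F x in at_top. x powr (1 - \<epsilon>) \<le> x / (2 * L)" using assms(1,4) by real_asymp
  moreover have "\<forall>\<^sub>F x in at_top. group_count_ub L x \<le> x / (2 * L)"
    unfolding group_count_ub_def using assms(1) by real_asymp
  moreover have "\<forall>\<^sub>F x in at_top. 1 \<le> part_blocks_lb L r R x / group_count_ub L x - 1"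
    unfolding group_count_ub_def part_blocks_lb_def using assms(1,2) by real_asymp
  moreover have "\<forall>\<^sub>F x in at_top. 0 \<le> set_blocks_lb r R x"
    unfolding set_blocks_lb_def using assms(2) by real_asymp
  ultimately show ?thesis by eventually_elim blast
qed

lemma eventually_parameters:
  fixes l r R :: nat and \<epsilon> \<eta> :: real
  assumes l: "0 < l" and r: "1 \<le> r" and "0 < \<epsilon>" "0 < \<eta>"
  shows "\<forall>\<^sub>F n in sequentially. real n powr (1 - \<epsilon>) \<le> real n / (2 * real l) \<and>
    l * threshold n \<le> n div (2 * l) \<and> 1 \<le> group_size l r R n \<and>
    failure_bound l n r R (threshold n) (group_size l r R n) \<le> \<eta>"
proof -
  define c where "c = - ln (1 - 1 / 2 ^ (r * r) :: real)"
  have "(1::real) < 2 ^ (r * r)" using r by (simp add: one_less_power)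
  then have "0 < c" unfolding c_def by (simp add: field_simps)
  let ?M = "\<lambda>n. group_count_ub (real l) (real n)"
  let ?N = "\<lambda>n. part_blocks_lb (real l) (real r) (real R) (real n)"
  let ?h = "\<lambda>n. set_blocks_lb (real r) (real R) (real n)"
  from eventually_compose_filterlim[OF eventually_real_parameters filterlim_real_sequentially]
  have "\<forall>\<^sub>F n in sequentially. real n powr (1 - \<epsilon>) \<le> real n / (2 * real l) \<and> ?M n \<le> real n / (2 * real l) \<and>
      1 \<le> ?N n / ?M n - 1 \<and> 0 \<le> ?h n \<and>
      real l ^ 2 * exp (real n * ln 4 - c * ?h n ^ 2) + real l * real n * ?M n * exp (- c * (?N n / ?M n - 1)) < \<eta>"
    using assms \<open>0 < c\<close> by simp
  then show ?thesis
  proof (rule eventually_mono, elim conjE, intro conjI)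
    fix n assume n: "real n powr (1 - \<epsilon>) \<le> real n / (2 * real l)" "?M n \<le> real n / (2 * real l)"
      "1 \<le> ?N n / ?M n - 1" "0 \<le> ?h n"
      "real l ^ 2 * exp (real n * ln 4 - c * ?h n ^ 2) + real l * real n * ?M n * exp (- c * (?N n / ?M n - 1)) < \<eta>"
    show "real n powr (1 - \<epsilon>) \<le> real n / (2 * real l)" using n(1) .
    have "real (l * threshold n) \<le> real (n div (2 * l))"
      using group_count_le_ub[of l n] n(2) half_part_ge[OF l, of n] by simp
    then show "l * threshold n \<le> n div (2 * l)" by (simp only: of_nat_le_iff)
    have "0 < ?M n" using group_count_le_ub[of l n] by linarith
    then have "0 \<le> ?N n" using n(3) by (simp add: field_simps)
    then have gs: "?N n / ?M n - 1 \<le> real (group_size l r R n)" using group_size_ge[OF l] r by simp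
    then show "1 \<le> group_size l r R n" using n(3) by linarith
    have "failure_bound l n r R (threshold n) (group_size l r R n)
        \<le> real l ^ 2 * exp (real n * ln 4 - c * ?h n ^ 2)
          + real l * real n * (real l * real (threshold n) + 1) * exp (- c * (?N n / ?M n - 1))"
      using failure_bound_le_exp[OF r n(4) set_blocks_ge_lb gs] r unfolding c_def by simp
    also have "\<dots> \<le> real l ^ 2 * exp (real n * ln 4 - c * ?h n ^ 2)
          + real l * real n * ?M n * exp (- c * (?N n / ?M n - 1))"
      using group_count_le_ub[of l n] by (intro add_left_mono mult_right_mono mult_left_mono) auto
    finally show "failure_bound l n r R (threshold n) (group_size l r R n) \<le> \<eta>" using n(5) by linarith
  qed
qed

lemma meager_split_constants:
  assumes "meager T"
  obtains r R pairF pairU1 pairU2 starF starc starU where "1 \<le> r"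
    "\<forall>H S. finite S \<longrightarrow> R \<le> card S \<longrightarrow> (\<exists>D\<subseteq>S. card D = r \<and> (\<exists>\<tau>. homogeneous H \<tau> D))"
    "\<forall>\<tau>1 \<tau>2. forbidden_split T (pairF \<tau>1 \<tau>2) (pairU1 \<tau>1 \<tau>2) (pairU2 \<tau>1 \<tau>2) \<tau>1 \<tau>2 \<and>
       card (pairU1 \<tau>1 \<tau>2) \<le> r \<and> card (pairU2 \<tau>1 \<tau>2) \<le> r"
    "\<forall>\<tau>. forbidden_split T (starF \<tau>) {starc \<tau>} (starU \<tau>) False \<tau> \<and> card (starU \<tau>) \<le> r"
proof -
  have "thin T" using assms unfolding meager_def by blast
  then have "\<forall>\<tau>1 \<tau>2. \<exists>F U1 U2. forbidden_split T F U1 U2 \<tau>1 \<tau>2" using thin_forbidden_split by metis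
  then obtain pairF pairU1 pairU2
    where pair: "\<forall>\<tau>1 \<tau>2. forbidden_split T (pairF \<tau>1 \<tau>2) (pairU1 \<tau>1 \<tau>2) (pairU2 \<tau>1 \<tau>2) \<tau>1 \<tau>2"
    by metis
  have "\<forall>\<tau>. \<exists>F c U. forbidden_split T F {c} U False \<tau>" using meager_forbidden_star_split[OF assms] by metis
  then obtain starF starc starU where star: "\<forall>\<tau>. forbidden_split T (starF \<tau>) {starc \<tau>} (starU \<tau>) False \<tau>"
    by metis
  define sizes where "sizes = range (\<lambda>(\<tau>1, \<tau>2). card (pairU1 \<tau>1 \<tau>2) + card (pairU2 \<tau>1 \<tau>2))
    \<union> range (\<lambda>\<tau>. card (starU \<tau>))"
  define r where "r = Suc (Max sizes)"
  have "finite sizes" unfolding sizes_def by simp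
  then have bound: "s \<le> r" if "s \<in> sizes" for s using Max_ge[OF _ that] unfolding r_def by simp
  have "card (pairU1 \<tau>1 \<tau>2) + card (pairU2 \<tau>1 \<tau>2) \<le> r" "card (starU \<tau>) \<le> r" for \<tau>1 \<tau>2 \<tau>
    using bound unfolding sizes_def by (auto intro: rev_image_eqI[of "(\<tau>1, \<tau>2)"])
  then have "card (pairU1 \<tau>1 \<tau>2) \<le> r \<and> card (pairU2 \<tau>1 \<tau>2) \<le> r" "card (starU \<tau>) \<le> r" for \<tau>1 \<tau>2 \<tau>
    using add_leE by blast+
  moreover obtain R where "\<forall>H S. finite S \<longrightarrow> R \<le> card S \<longrightarrow> (\<exists>D\<subseteq>S. card D = r \<and> (\<exists>\<tau>. homogeneous H \<tau> D))"
    using ramsey_homogeneous by blast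
  moreover have "1 \<le> r" unfolding r_def by simp
  ultimately show ?thesis using pair star by (intro that[of r R pairF pairU1 pairU2 starF starc starU]) auto
qed

lemma eps_balanced_part_card:
  assumes "eps_balanced \<epsilon> n l X" "0 < l" "real n powr (1 - \<epsilon>) \<le> real n / (2 * real l)" "k < l"
  shows "n div (2 * l) \<le> card (X k)"
proof -
  have "real n / real l - real n powr (1 - \<epsilon>) \<le> real (card (X k))"
    using assms(1,4) unfolding eps_balanced_def by (metis abs_diff_le_iff diff_le_eq add.commute)
  moreover have "real n / real l - real n / (2 * real l) = real n / (2 * real l)"
    using assms(2) by (simp add: field_simps)
  ultimately have "real n / (2 * real l) \<le> real (card (X k))" using assms(3) by linarith
  moreover have "real (n div (2 * l)) \<le> real n / (2 * real l)"
    using of_nat_div_le_of_nat[of n "2 * l"] by simp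
  ultimately show ?thesis by linarith
qed

lemma card_unique_extensions_ge:
  assumes hT: "hereditary T" and r: "1 \<le> r"
    and ramsey: "\<forall>H S. finite S \<longrightarrow> R \<le> card S \<longrightarrow> (\<exists>D\<subseteq>S. card D = r \<and> (\<exists>\<tau>. homogeneous H \<tau> D))"
    and pair: "\<forall>\<tau>1 \<tau>2. forbidden_split T (pairF \<tau>1 \<tau>2) (pairU1 \<tau>1 \<tau>2) (pairU2 \<tau>1 \<tau>2) \<tau>1 \<tau>2 \<and>
       card (pairU1 \<tau>1 \<tau>2) \<le> r \<and> card (pairU2 \<tau>1 \<tau>2) \<le> r"
    and star: "\<forall>\<tau>. forbidden_split T (starF \<tau>) {starc \<tau>} (starU \<tau>) False \<tau> \<and> card (starU \<tau>) \<le> r"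
    and Gs: "\<forall>i<l. wf_graph (Gs i) \<and> Gs i \<in> T" "\<forall>i<l. \<forall>j<l. i \<noteq> j \<longrightarrow> verts (Gs i) \<inter> verts (Gs j) = {}"
      "(\<Union>i<l. verts (Gs i)) = {1..n}" "eps_balanced \<epsilon> n l (\<lambda>i. verts (Gs i))"
    and l: "0 < l" and n: "real n powr (1 - \<epsilon>) \<le> real n / (2 * real l)"
      "l * threshold n \<le> n div (2 * l)" "1 \<le> group_size l r R n"
  shows "real (card {G \<in> extensions l Gs. unique_Tl_partition T l G (\<lambda>i. verts (Gs i))})
    \<ge> (1 - failure_bound l n r R (threshold n) (group_size l r R n)) * real (card (extensions l Gs))"
proof -
  have part: "n div (2 * l) \<le> card (verts (Gs k))" if "k < l" for k
    using eps_balanced_part_card[OF Gs(4) l n(1) that] .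
  interpret random_extension T l n Gs "threshold n" r R "group_size l r R n"
    pairF pairU1 pairU2 starF starc starU
  proof (unfold_locales)
    show "\<forall>k<l. l * threshold n \<le> card (verts (Gs k))" using part n(2) by (meson le_trans)
    show "\<forall>i<l. (l * threshold n + 1) * group_size l r R n \<le> (card (verts (Gs i)) - R) div r"
    proof (intro allI impI)
      fix i assume "i < l"
      have "(l * threshold n + 1) * group_size l r R n \<le> (n div (2 * l) - R) div r"
        unfolding group_size_def by (rule times_div_less_eq_dividend)
      also have "\<dots> \<le> (card (verts (Gs i)) - R) div r" using part[OF \<open>i < l\<close>] by (intro div_le_mono diff_le_mono)
      finally show "(l * threshold n + 1) * group_size l r R n \<le> (card (verts (Gs i)) - R) div r" .
    qed
  qed (use assms in auto)
  show ?thesis by (rule card_unique_extensions)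
qed

lemma eventually_unique_Tl_partition:
  assumes "meager T" "0 < l" "0 < \<epsilon>" "0 < \<eta>"
  shows "\<forall>\<^sub>F n in sequentially. \<forall>Gs. (\<forall>i<l. wf_graph (Gs i) \<and> Gs i \<in> T) \<longrightarrow>
     (\<forall>i<l. \<forall>j<l. i \<noteq> j \<longrightarrow> verts (Gs i) \<inter> verts (Gs j) = {}) \<longrightarrow>
     (\<Union>i<l. verts (Gs i)) = {1..n} \<longrightarrow> eps_balanced \<epsilon> n l (\<lambda>i. verts (Gs i)) \<longrightarrow>
     (1 - \<eta>) * real (card (extensions l Gs))
       \<le> real (card {G \<in> extensions l Gs. unique_Tl_partition T l G (\<lambda>i. verts (Gs i))})"
proof -
  obtain r R pairF pairU1 pairU2 starF starc starU where split: "1 \<le> r"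
    "\<forall>H S. finite S \<longrightarrow> R \<le> card S \<longrightarrow> (\<exists>D\<subseteq>S. card D = r \<and> (\<exists>\<tau>. homogeneous H \<tau> D))"
    "\<forall>\<tau>1 \<tau>2. forbidden_split T (pairF \<tau>1 \<tau>2) (pairU1 \<tau>1 \<tau>2) (pairU2 \<tau>1 \<tau>2) \<tau>1 \<tau>2 \<and>
       card (pairU1 \<tau>1 \<tau>2) \<le> r \<and> card (pairU2 \<tau>1 \<tau>2) \<le> r"
    "\<forall>\<tau>. forbidden_split T (starF \<tau>) {starc \<tau>} (starU \<tau>) False \<tau> \<and> card (starU \<tau>) \<le> r"
    using meager_split_constants[OF assms(1)] by blast
  have "hereditary T" using assms(1) unfolding meager_def thin_def by blast
  show ?thesis
    using eventually_parameters[OF assms(2) split(1) assms(3,4), of R]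
  proof (rule eventually_mono, intro allI impI)
    fix n Gs assume n: "real n powr (1 - \<epsilon>) \<le> real n / (2 * real l) \<and> l * threshold n \<le> n div (2 * l) \<and>
        1 \<le> group_size l r R n \<and> failure_bound l n r R (threshold n) (group_size l r R n) \<le> \<eta>"
      and Gs: "\<forall>i<l. wf_graph (Gs i) \<and> Gs i \<in> T" "\<forall>i<l. \<forall>j<l. i \<noteq> j \<longrightarrow> verts (Gs i) \<inter> verts (Gs j) = {}"
        "(\<Union>i<l. verts (Gs i)) = {1..n}" "eps_balanced \<epsilon> n l (\<lambda>i. verts (Gs i))"
    have "(1 - \<eta>) * real (card (extensions l Gs))
        \<le> (1 - failure_bound l n r R (threshold n) (group_size l r R n)) * real (card (extensions l Gs))"
      using n by (intro mult_right_mono) auto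
    also have "\<dots> \<le> real (card {G \<in> extensions l Gs. unique_Tl_partition T l G (\<lambda>i. verts (Gs i))})"
      using card_unique_extensions_ge[OF \<open>hereditary T\<close> split Gs assms(2)] n by blast
    finally show "(1 - \<eta>) * real (card (extensions l Gs))
        \<le> real (card {G \<in> extensions l Gs. unique_Tl_partition T l G (\<lambda>i. verts (Gs i))})" .
  qed
qed

theorem lemma2p12:
  fixes T :: "graph set" and l :: nat and \<epsilon> :: real
  assumes "meager T" and "l > 0" and "\<epsilon> > 0"
  shows "\<forall>\<eta>::real. \<eta> > 0 \<longrightarrow> (\<exists>n0::nat. \<forall>n\<ge>n0. \<forall>Gs :: nat \<Rightarrow> graph.
     (\<forall>i<l. wf_graph (Gs i) \<and> Gs i \<in> T) \<longrightarrow>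
     (\<forall>i<l. \<forall>j<l. i \<noteq> j \<longrightarrow> verts (Gs i) \<inter> verts (Gs j) = {}) \<longrightarrow>
     (\<Union>i<l. verts (Gs i)) = {1..n} \<longrightarrow>
     eps_balanced \<epsilon> n l (\<lambda>i. verts (Gs i)) \<longrightarrow>
     real (card {G \<in> extensions l Gs. unique_Tl_partition T l G (\<lambda>i. verts (Gs i))})
       \<ge> (1 - \<eta>) * real (card (extensions l Gs)))"
  using eventually_unique_Tl_partition[OF assms] unfolding eventually_sequentially by blast

end
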